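(* Let $p$ be a prime, $m$ a positive integer, $q=p^m$ with $q>2$, and $n=q^2+1$. Let $\lambda\in\mathbb{F}_{q^2}^*$ have multiplicative order $r$, where $r\mid(q-1)$ and $\nu_2(r)=\nu_2(q-1)$. Let $\delta\in\mathbb{F}_{q^4}$ be a primitive $rn$-th root of unity with $\delta^n=\lambda$, let $g_1(x)=(x-\delta)(x-\delta^{q^2})$, $g_{q^2-q+1}(x)=(x-\delta^{q^2-q+1})(x-\delta^{q^4-q^3+q^2})$, and let $\mathcal{C}(1,q^2-q+1)$ be the $\lambda$-constacyclic code of length $n$ over $\mathbb{F}_{q^2}$ with check polynomial $g_1(x)g_{q^2-q+1}(x)$. Then the subfield subcode $\mathcal{C}(1,q^2-q+1)|_{\mathbb{F}_q}=\mathcal{C}(1,q^2-q+1)\cap\mathbb{F}_q^n$ has parameters $[q^2+1,4,q^2-q]$ and weight enumerator \[ 1+(q^2-q)(q^2+1)z^{q^2-q}+(q-1)(q^2+1)z^{q^2}, \] and its dual code (over $\mathbb{F}_q$) has parameters $[q^2+1,q^2-3,4]$.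
   Context: $\nu_2$ is the $2$-adic valuation. A $\lambda$-constacyclic code of length $n$ over $\mathbb{F}_{q^2}$ is an ideal of $\mathbb{F}_{q^2}[x]/\langle x^n-\lambda\rangle$; its check polynomial is $(x^n-\lambda)/g(x)$ where $g$ is the monic generator polynomial. The weight enumerator is $\sum_iA_iz^i$ with $A_i$ the number of codewords of Hamming weight $i$. *)

theory Defs
  imports "HOL-Computational_Algebra.Computational_Algebra"
begin

text \<open>All fields are realised inside one ambient finite field of type 'a
(playing the role of F_{q^4}); the subfield F_{q^k} is the fixed set of x |-> x^(q^k).\<close>

definition Fsub :: "nat \<Rightarrow> 'a::field set" where
  "Fsub k = {x. x ^ k = x}"

definition mult_ord :: "'a::field \<Rightarrow> nat" where
  "mult_ord x = (if \<exists>k>0. x ^ k = 1 then (LEAST k. 0 < k \<and> x ^ k = 1) else 0)"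

text \<open>Vectors of length n are functions nat => 'a vanishing at indices >= n.\<close>
definition vec_poly :: "nat \<Rightarrow> (nat \<Rightarrow> 'a::comm_monoid_add) \<Rightarrow> 'a poly" where
  "vec_poly n c = (\<Sum>i<n. monom (c i) i)"

definition hamming_wt :: "nat \<Rightarrow> (nat \<Rightarrow> 'a::zero) \<Rightarrow> nat" where
  "hamming_wt n c = card {i\<in>{..<n}. c i \<noteq> 0}"

definition min_dist :: "nat \<Rightarrow> (nat \<Rightarrow> 'a::zero) set \<Rightarrow> nat" where
  "min_dist n C = Min (hamming_wt n ` (C - {(\<lambda>_. 0)}))"

definition weight_enum :: "nat \<Rightarrow> (nat \<Rightarrow> 'a::zero) set \<Rightarrow> nat poly" where
  "weight_enum n C = (\<Sum>i\<le>n. monom (card {c\<in>C. hamming_wt n c = i}) i)"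

definition constacyclic_code_chk ::
  "'a::field set \<Rightarrow> nat \<Rightarrow> 'a \<Rightarrow> 'a poly \<Rightarrow> (nat \<Rightarrow> 'a) set" where
  "constacyclic_code_chk K n lam h =
     (let g = (monom 1 n - [:lam:]) div h in
      {c. (\<forall>i<n. c i \<in> K) \<and> (\<forall>i\<ge>n. c i = 0) \<and>
          (\<exists>a. (\<forall>j. coeff a j \<in> K) \<and> vec_poly n c = (a * g) mod (monom 1 n - [:lam:]))})"

definition subfield_subcode :: "nat \<Rightarrow> (nat \<Rightarrow> 'a) set \<Rightarrow> 'a set \<Rightarrow> (nat \<Rightarrow> 'a) set" where
  "subfield_subcode n C K = {c\<in>C. \<forall>i<n. c i \<in> K}"

definition dual_code :: "'a::field set \<Rightarrow> nat \<Rightarrow> (nat \<Rightarrow> 'a) set \<Rightarrow> (nat \<Rightarrow> 'a) set" where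
  "dual_code K n C = {y. (\<forall>i<n. y i \<in> K) \<and> (\<forall>i\<ge>n. y i = 0) \<and>
                        (\<forall>c\<in>C. (\<Sum>i<n. c i * y i) = 0)}"

end

theory Submission
  imports Defs "HOL-Library.Function_Algebras"
begin

text \<open>Write \<open>\<theta> = \<delta>\<inverse>\<close> and \<open>Tr\<close> for the trace from \<open>F\<^sub>q\<^sub>4\<close> to \<open>F\<^sub>q\<close>.  By Delsarte's
  theorem the subfield subcode is the trace code of the words \<open>(Tr (a \<theta>\<^sup>i))\<^sub>i\<^sub><\<^sub>n\<close>, and \<open>a\<close> is
  recovered as the value of its word at \<open>\<delta>\<close>, so there are \<open>q\<^sup>4\<close> codewords.

  Since \<open>\<theta>\<^sup>n = \<lambda>\<inverse> \<in> F\<^sub>q\<close>, the norm of every \<open>\<theta>\<^sup>i\<close> to \<open>F\<^sub>q\<^sub>2\<close> lies in \<open>F\<^sub>q\<close>, and an element whose norm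
  and trace to \<open>F\<^sub>q\<^sub>2\<close> both lie in \<open>F\<^sub>q\<close> lies in \<open>F\<^sub>q\<close>.  This makes the \<open>n = q\<^sup>2 + 1\<close> points \<open>\<theta>\<^sup>i\<close>
  an ovoid of \<open>PG(3, q) = P(F\<^sub>q\<^sub>4 / F\<^sub>q)\<close>: no two are proportional and no three are dependent.

  The codeword of \<open>a \<noteq> 0\<close> has weight \<open>n - Z(a)\<close>, where \<open>Z(a)\<close> counts the points on the hyperplane
  \<open>Tr (a x) = 0\<close>.  The \<open>(q - 1) n\<close> tangent hyperplanes \<open>a = \<epsilon> t \<theta>\<^bsup>i q\<^sup>2\<^esup>\<close> meet the ovoid in one
  point; counting pairs of points gives the first two moments of \<open>Z\<close>, and on the remaining
  hyperplanes they are those of the constant \<open>q + 1\<close>.  This yields the weights \<open>q\<^sup>2\<close> and \<open>q\<^sup>2 - q\<close>.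

  The dual code is the kernel of \<open>y \<mapsto> \<Sum> y\<^sub>i \<theta>\<^sup>i\<close> from \<open>F\<^sub>q\<^sup>n\<close> onto \<open>F\<^sub>q\<^sub>4\<close>, so it has \<open>q\<^bsup>n - 4\<^esup>\<close>
  words.  It has no nonzero word of weight below \<open>4\<close> because no three points are dependent, and
  four of the \<open>q + 1 \<ge> 4\<close> points on a secant hyperplane are dependent.\<close>

section \<open>Finite fields, polynomials and counting\<close>

text \<open>The library's \<open>finite_field_power_card_eq_same\<close> needs the sort \<open>finite_field\<close>,
  which a type variable of sort \<open>{field, finite}\<close> does not carry.\<close>

lemma power_card_UNIV:
  fixes x :: "'a::{field,finite}"
  shows "x ^ card (UNIV :: 'a set) = x"
proof (cases "x = 0")
  case False
  let ?U = "UNIV - {0} :: 'a set"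
  have "(\<Prod>y\<in>?U. x * y) = (\<Prod>y\<in>?U. y)"
    using False by (intro prod.reindex_bij_witness[of _ "\<lambda>y. y / x" "\<lambda>y. x * y"]) auto
  hence "x ^ card ?U * \<Prod>?U = 1 * \<Prod>?U"
    by (simp add: prod.distrib)
  hence "x ^ card ?U = 1"
    by (subst (asm) mult_right_cancel) auto
  moreover have "card (UNIV :: 'a set) = Suc (card ?U)"
    using finite_UNIV_card_ge_0[where ?'a = 'a] by (simp add: card_Diff_singleton_if)
  ultimately show ?thesis
    by (metis mult.right_neutral power_Suc)
qed (simp add: finite_UNIV_card_ge_0)

lemma power_eq_1_iff_mult_ord_dvd:
  fixes x :: "'a::field"
  assumes "mult_ord x > 0"
  shows "x ^ k = 1 \<longleftrightarrow> mult_ord x dvd k"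
proof -
  have ex: "\<exists>k>0. x ^ k = 1"
    using assms by (auto simp: mult_ord_def split: if_splits)
  hence ord: "mult_ord x = (LEAST k. 0 < k \<and> x ^ k = 1)"
    by (simp add: mult_ord_def)
  have x_ord: "x ^ mult_ord x = 1"
    unfolding ord using LeastI_ex[OF ex] by blast
  have "x ^ k = (x ^ mult_ord x) ^ (k div mult_ord x) * x ^ (k mod mult_ord x)"
    by (simp only: power_mult[symmetric] power_add[symmetric] mult_div_mod_eq)
  hence "x ^ k = x ^ (k mod mult_ord x)"
    by (simp add: x_ord)
  moreover have "x ^ (k mod mult_ord x) \<noteq> 1" if "k mod mult_ord x > 0"
    using that assms not_less_Least[of "k mod mult_ord x" "\<lambda>k. 0 < k \<and> x ^ k = 1"]
    unfolding ord[symmetric] by auto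
  ultimately show ?thesis
    using x_ord by (auto simp: dvd_eq_mod_eq_0)
qed

lemma odd_cofactor_if_same_multiplicity_2:
  fixes r N :: nat
  assumes "N = r * s" "N \<noteq> 0" "multiplicity 2 r = multiplicity 2 N"
  shows "odd s"
proof -
  have "r \<noteq> 0" "s \<noteq> 0"
    using assms by auto
  hence "multiplicity 2 N = multiplicity 2 r + multiplicity (2::nat) s"
    unfolding assms(1) by (intro prime_elem_multiplicity_mult_distrib) auto
  thus ?thesis
    using assms \<open>s \<noteq> 0\<close> by (simp add: multiplicity_eq_zero_iff)
qed

lemma coprime_square_plus_1_odd_divisor:
  fixes q s :: nat
  assumes "odd s" "s dvd q - 1" "q > 0"
  shows "coprime (q^2 + 1) s"
proof -
  have "q^2 + 1 = (q - 1) * (q + 1) + 2"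
    using assms(3) by (cases q) (simp_all add: power2_eq_square algebra_simps)
  moreover have "gcd (q^2 + 1) s dvd (q - 1) * (q + 1)"
    using assms(2) by (meson dvd_mult2 dvd_trans gcd_dvd2)
  ultimately have "gcd (q^2 + 1) s dvd 2"
    by (metis dvd_add_right_iff gcd_dvd1)
  hence "gcd (q^2 + 1) s = 1 \<or> gcd (q^2 + 1) s = 2"
    using two_is_prime_nat prime_nat_iff by blast
  moreover have "odd (gcd (q^2 + 1) s)"
    using assms(1) by (meson dvd_trans gcd_dvd2)
  ultimately have "gcd (q^2 + 1) s = 1"
    by (metis dvd_refl)
  thus ?thesis
    by (simp add: coprime_iff_gcd_eq_1)
qed

lemma poly_vec_poly: "poly (vec_poly n (c :: nat \<Rightarrow> 'a::comm_semiring_1)) x = (\<Sum>i<n. c i * x ^ i)"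
  by (simp add: vec_poly_def poly_sum poly_monom)

lemma coeff_vec_poly: "coeff (vec_poly n c) i = (if i < n then c i else 0)"
  by (simp add: vec_poly_def coeff_sum coeff_monom)

lemma degree_vec_poly_less: "n > 0 \<Longrightarrow> degree (vec_poly n c) < n"
  by (rule degree_lessI) (auto simp: coeff_vec_poly)

lemma vec_poly_diff: "vec_poly n (\<lambda>i. c i - d i) = vec_poly n c - vec_poly n (d :: nat \<Rightarrow> 'a::comm_ring_1)"
  by (simp add: vec_poly_def sum_subtractf[symmetric] diff_monom)

lemma vec_poly_eq_0_if_roots:
  fixes c :: "nat \<Rightarrow> 'a::field"
  assumes "finite R" "card R \<ge> n" "\<And>z. z \<in> R \<Longrightarrow> poly (vec_poly n c) z = 0" "i < n"
  shows "c i = 0"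
proof -
  have "vec_poly n c = 0"
  proof (rule ccontr)
    assume nz: "vec_poly n c \<noteq> 0"
    have "card R \<le> card {z. poly (vec_poly n c) z = 0}"
      using assms(3) card_poly_roots_bound[OF nz] poly_roots_finite[OF nz] by (intro card_mono) auto
    also have "\<dots> \<le> degree (vec_poly n c)"
      by (rule card_poly_roots_bound[OF nz])
    also have "\<dots> < n"
      using assms(4) by (intro degree_vec_poly_less) simp
    finally show False
      using assms(2) by simp
  qed
  thus ?thesis
    using coeff_vec_poly[of n c i] assms(4) by simp
qed

lemma prod_linear_factors_dvd:
  fixes P :: "'a::field poly"
  assumes "finite A" "\<And>a. a \<in> A \<Longrightarrow> poly P a = 0"
  shows "(\<Prod>a\<in>A. [:-a, 1:]) dvd P"
  using assms
proof (induction A arbitrary: P rule: finite_induct)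
  case (insert a A P)
  obtain P' where P: "P = [:-a, 1:] * P'"
    using insert.prems by (metis insertI1 poly_eq_0_iff_dvd dvdE)
  have "(\<Prod>a\<in>A. [:-a, 1:]) dvd P'"
    using insert.prems insert.hyps(2) by (intro insert.IH) (auto simp: P)
  thus ?case
    unfolding P prod.insert[OF insert.hyps] by (rule mult_dvd_mono[OF dvd_refl])
qed simp

lemma monic_dvd_eqI:
  fixes P Q :: "'a::field poly"
  assumes "P dvd Q" "Q \<noteq> 0" "degree P = degree Q" "lead_coeff P = 1" "lead_coeff Q = 1"
  shows "P = Q"
proof -
  obtain K where K: "Q = P * K"
    using assms(1) by (elim dvdE)
  hence "P \<noteq> 0" "K \<noteq> 0"
    using assms(2) by auto
  hence "degree K = 0"
    using assms(3) by (simp add: K degree_mult_eq)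
  then obtain c where "K = [:c:]"
    by (metis degree_eq_zeroE)
  moreover have "lead_coeff K = 1"
    using assms(4,5) by (simp add: K lead_coeff_mult)
  ultimately show ?thesis
    using K by simp
qed

lemma card_eq_card_image_mult_card_kernel:
  fixes L :: "'v::ab_group_add \<Rightarrow> 'w::ab_group_add"
  assumes add_closed: "\<And>x y. x \<in> V \<Longrightarrow> y \<in> V \<Longrightarrow> x + y \<in> V"
    and minus_closed: "\<And>x. x \<in> V \<Longrightarrow> - x \<in> V"
    and additive: "\<And>x y. x \<in> V \<Longrightarrow> y \<in> V \<Longrightarrow> L (x + y) = L x + L y"
    and image: "L ` V = W"
  shows "card V = card W * card {x \<in> V. L x = 0}"
proof -
  define s where "s = inv_into V L"
  have s: "s w \<in> V" "L (s w) = w" if "w \<in> W" for w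
    using that image by (auto simp: s_def inv_into_into f_inv_into_f)
  have L_minus: "L (- x) = - L x" if "x \<in> V" for x
    using additive[OF that minus_closed[OF that]] additive[OF that add_closed[OF that minus_closed[OF that]]]
    by (simp add: eq_neg_iff_add_eq_0 add.commute)
  have diff_closed: "x - y \<in> V" if "x \<in> V" "y \<in> V" for x y
    using add_closed[OF that(1) minus_closed[OF that(2)]] by simp
  have L_diff: "L (x - y) = L x - L y" if "x \<in> V" "y \<in> V" for x y
    using additive[OF that(1) minus_closed[OF that(2)]] L_minus[OF that(2)] by simp
  have "bij_betw (\<lambda>x. (L x, x - s (L x))) V (W \<times> {x \<in> V. L x = 0})"
  proof (rule bij_betwI[where g = "\<lambda>(w, k). k + s w"])
    show "(\<lambda>x. (L x, x - s (L x))) \<in> V \<rightarrow> W \<times> {x \<in> V. L x = 0}"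
      using image s diff_closed L_diff by auto
    show "(\<lambda>(w, k). k + s w) \<in> W \<times> {x \<in> V. L x = 0} \<rightarrow> V"
      using s add_closed by auto
  qed (use s additive in auto)
  thus ?thesis
    by (simp add: bij_betw_same_card card_cartesian_product)
qed

definition vectors_on :: "'a set \<Rightarrow> nat set \<Rightarrow> (nat \<Rightarrow> 'a::zero) set" where
  "vectors_on K I = {y. (\<forall>i\<in>I. y i \<in> K) \<and> (\<forall>i. i \<notin> I \<longrightarrow> y i = 0)}"

lemma vectors_on_mono: "0 \<in> K \<Longrightarrow> I \<subseteq> J \<Longrightarrow> vectors_on K I \<subseteq> vectors_on K J"
  by (auto simp: vectors_on_def)

lemma card_vectors_on:
  assumes "finite I"
  shows "card (vectors_on K I) = card K ^ card I"
proof -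
  have "bij_betw (\<lambda>y. restrict y I) (vectors_on K I) (I \<rightarrow>\<^sub>E K)"
    by (rule bij_betwI[where g = "\<lambda>f i. if i \<in> I then f i else 0"])
       (auto simp: vectors_on_def fun_eq_iff)
  thus ?thesis
    using assms by (simp add: bij_betw_same_card card_funcsetE)
qed

lemma eq_const_if_moments:
  fixes Z :: "'b \<Rightarrow> nat"
  assumes "finite A" "(\<Sum>a\<in>A. Z a) = c * card A" "(\<Sum>a\<in>A. Z a ^ 2) = c ^ 2 * card A" "a \<in> A"
  shows "Z a = c"
proof -
  have "(\<Sum>a\<in>A. (int (Z a) - int c) ^ 2) =
      int (\<Sum>a\<in>A. Z a ^ 2) - 2 * int c * int (\<Sum>a\<in>A. Z a) + int c ^ 2 * int (card A)"
    by (simp add: power2_diff sum_subtractf sum.distrib sum_distrib_left algebra_simps)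
  also have "\<dots> = 0"
    by (simp only: assms(2,3)) (simp add: power2_eq_square algebra_simps)
  finally have "\<forall>a\<in>A. (int (Z a) - int c) ^ 2 = 0"
    using assms(1) by (subst (asm) sum_nonneg_eq_0_iff) auto
  thus ?thesis
    using assms(4) by simp
qed

lemma hamming_wt_le: "hamming_wt n c \<le> n"
  unfolding hamming_wt_def by (rule order.trans[OF card_mono[of "{..<n}"]]) auto

lemma coeff_weight_enum: "coeff (weight_enum n C) k = card {c \<in> C. hamming_wt n c = k}"
proof (cases "k \<le> n")
  case False
  have "hamming_wt n c \<noteq> k" for c
    using hamming_wt_le[of n c] False by linarith
  hence "{c \<in> C. hamming_wt n c = k} = {}"
    by blast
  moreover have "coeff (weight_enum n C) k = 0"
    using False by (simp add: weight_enum_def coeff_sum coeff_monom)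
  ultimately show ?thesis
    by (simp only: card.empty)
qed (simp add: weight_enum_def coeff_sum coeff_monom)

section \<open>The field with \<open>q\<^sup>4\<close> elements over its subfield \<open>F\<^sub>q\<close>\<close>

locale quartic_field =
  fixes p m q :: nat
  assumes prime_p: "prime p" and m_pos: "m > 0" and q_def: "q = p ^ m"
    and card_UNIV: "card (UNIV :: 'a::{field,finite} set) = q ^ 4"
begin

lemma q_ge_2: "q \<ge> 2"
proof -
  have "p ^ 1 \<le> p ^ m"
    using m_pos prime_gt_0_nat[OF prime_p] by (intro power_increasing) auto
  thus ?thesis
    using prime_ge_2_nat[OF prime_p] by (simp add: q_def)
qed

lemma CHAR_eq: "CHAR('a) = p"
proof -
  have "(\<Sum>x\<in>(UNIV :: 'a set). x + 1) = (\<Sum>x\<in>UNIV. x)"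
    by (rule sum.reindex_bij_witness[of _ "\<lambda>y. y - 1" "\<lambda>y. y + 1"]) auto
  hence "of_nat (card (UNIV :: 'a set)) = (0 :: 'a)"
    by (simp add: sum.distrib)
  hence "CHAR('a) dvd p"
    by (simp add: card_UNIV q_def of_nat_eq_0_iff_char_dvd)
  moreover have "prime CHAR('a)"
    using prime_CHAR_semidom finite_imp_CHAR_pos[OF finite_UNIV] by auto
  ultimately show ?thesis
    using prime_p by (simp add: primes_dvd_imp_eq)
qed

lemma of_nat_q: "of_nat q = (0 :: 'a)"
  using m_pos by (simp add: q_def CHAR_eq of_nat_eq_0_iff_char_dvd)

lemma frobenius_add: "(x + y :: 'a) ^ q ^ k = x ^ q ^ k + y ^ q ^ k"
  using prime_p by (intro freshmans_dream'[where n = "m * k"]) (simp_all add: CHAR_eq q_def power_mult)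

lemma frobenius_sum: "(sum (f :: 'b \<Rightarrow> 'a) A) ^ q ^ k = (\<Sum>i\<in>A. f i ^ q ^ k)"
  using prime_p by (intro freshmans_dream_sum'[where n = "m * k"]) (simp_all add: CHAR_eq q_def power_mult)

lemma frobenius_diff: "(x - y :: 'a) ^ q ^ k = x ^ q ^ k - y ^ q ^ k"
  using frobenius_add[of "x - y" y k] by (simp add: algebra_simps)

lemma frobenius_minus: "(- x :: 'a) ^ q ^ k = - (x ^ q ^ k)"
  using frobenius_diff[of 0 x k] q_ge_2 by simp

lemmas frobenius_add1 = frobenius_add[of _ _ 1, simplified]
lemmas frobenius_diff1 = frobenius_diff[of _ _ 1, simplified]
lemmas frobenius_minus1 = frobenius_minus[of _ 1, simplified]
lemmas frobenius_sum1 = frobenius_sum[of _ _ 1, simplified]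

lemma power_q4: "(x :: 'a) ^ q ^ 4 = x"
  using power_card_UNIV[of x] by (simp only: card_UNIV)

lemma frobenius_compose:
  "((x :: 'a) ^ q) ^ q = x ^ q\<^sup>2"  "(x ^ q) ^ q\<^sup>2 = x ^ q ^ 3"  "(x ^ q) ^ q ^ 3 = x"
  "(x ^ q\<^sup>2) ^ q = x ^ q ^ 3"  "(x ^ q\<^sup>2) ^ q\<^sup>2 = x"  "(x ^ q\<^sup>2) ^ q ^ 3 = x ^ q"
  "(x ^ q ^ 3) ^ q = x"  "(x ^ q ^ 3) ^ q\<^sup>2 = x ^ q"  "(x ^ q ^ 3) ^ q ^ 3 = x ^ q\<^sup>2"
proof -
  have x_q4k: "x ^ (q ^ 4 * k) = x ^ k" for k
    by (simp only: power_mult power_q4)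
  have exps: "q * q = q\<^sup>2" "q * q\<^sup>2 = q ^ 3" "q * q ^ 3 = q ^ 4" "q\<^sup>2 * q = q ^ 3"
    "q\<^sup>2 * q\<^sup>2 = q ^ 4" "q\<^sup>2 * q ^ 3 = q ^ 4 * q" "q ^ 3 * q = q ^ 4"
    "q ^ 3 * q\<^sup>2 = q ^ 4 * q" "q ^ 3 * q ^ 3 = q ^ 4 * q\<^sup>2"
    by (simp_all add: power2_eq_square power3_eq_cube power4_eq_xxxx mult.assoc)
  show "((x :: 'a) ^ q) ^ q = x ^ q\<^sup>2"  "(x ^ q) ^ q\<^sup>2 = x ^ q ^ 3"  "(x ^ q) ^ q ^ 3 = x"
    "(x ^ q\<^sup>2) ^ q = x ^ q ^ 3"  "(x ^ q\<^sup>2) ^ q\<^sup>2 = x"  "(x ^ q\<^sup>2) ^ q ^ 3 = x ^ q"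
    "(x ^ q ^ 3) ^ q = x"  "(x ^ q ^ 3) ^ q\<^sup>2 = x ^ q"  "(x ^ q ^ 3) ^ q ^ 3 = x ^ q\<^sup>2"
    by (simp_all only: power_mult[symmetric] exps power_q4 x_q4k)
qed

abbreviation Fq :: "'a set" where "Fq \<equiv> Fsub q"

lemma Fq_iff: "x \<in> Fq \<longleftrightarrow> x ^ q = x"
  by (simp add: Fsub_def)

lemma power_q_eq: "(x :: 'a) ^ q = x ^ (q - 1) * x"
  using q_ge_2 by (simp add: power_Suc2[symmetric])

lemma Fq_0 [simp]: "0 \<in> Fq" and Fq_1 [simp]: "1 \<in> Fq"
  using q_ge_2 by (simp_all add: Fq_iff)

lemma Fq_add: "x \<in> Fq \<Longrightarrow> y \<in> Fq \<Longrightarrow> x + y \<in> Fq"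
  and Fq_diff: "x \<in> Fq \<Longrightarrow> y \<in> Fq \<Longrightarrow> x - y \<in> Fq"
  and Fq_minus: "x \<in> Fq \<Longrightarrow> - x \<in> Fq"
  and Fq_mult: "x \<in> Fq \<Longrightarrow> y \<in> Fq \<Longrightarrow> x * y \<in> Fq"
  and Fq_inverse: "x \<in> Fq \<Longrightarrow> inverse x \<in> Fq"
  and Fq_divide: "x \<in> Fq \<Longrightarrow> y \<in> Fq \<Longrightarrow> x / y \<in> Fq"
  by (simp_all add: Fq_iff frobenius_add1 frobenius_diff1 frobenius_minus1 power_mult_distrib
      power_inverse power_divide)

lemma power_commute_exponents: "((x :: 'a) ^ i) ^ k = (x ^ k) ^ i"
  by (simp only: power_mult[symmetric] mult.commute)

lemma Fq_power: "x \<in> Fq \<Longrightarrow> x ^ k \<in> Fq"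
  by (simp add: Fq_iff power_commute_exponents[of x k])

lemma Fq_of_nat: "of_nat k \<in> Fq"
  by (induction k) (auto intro: Fq_add)

lemma Fq_power_q_power: "x \<in> Fq \<Longrightarrow> x ^ q ^ k = x"
  by (induction k) (simp_all add: Fq_iff power_mult)

lemma Fq_subset_Fsub_q2: "Fq \<subseteq> Fsub (q\<^sup>2)"
  using Fq_power_q_power[of _ 2] by (auto simp: Fsub_def)

lemma card_Fq_le: "card Fq \<le> q"
proof -
  define P :: "'a poly" where "P = monom 1 q - monom 1 1"
  have "coeff P q = 1"
    using q_ge_2 by (simp add: P_def coeff_monom)
  hence "P \<noteq> 0"
    by auto
  moreover have "degree P \<le> q"
    using q_ge_2 by (auto simp: P_def intro!: degree_diff_le order.trans[OF degree_monom_le])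
  moreover have "Fq = {x. poly P x = 0}"
    by (auto simp: P_def poly_monom Fq_iff)
  ultimately show ?thesis
    using card_poly_roots_bound[of P] by simp
qed

text \<open>With \<open>s = (q\<^sup>4 - 1) / (q - 1)\<close>, every element outside \<open>F\<^sub>q\<close> is a root of
  \<open>\<Sum>i<s. X\<^bsup>(q - 1) i\<^esup>\<close>, since \<open>X\<^bsup>q\<^sup>4\<^esup> - X = (X\<^sup>q - X) \<Sum>i<s. X\<^bsup>(q - 1) i\<^esup>\<close>.\<close>

lemma card_Fq_ge: "card Fq \<ge> q"
proof -
  define s where "s = q ^ 3 + q\<^sup>2 + q + 1"
  define G :: "'a poly" where "G = (\<Sum>i<s. monom 1 ((q - 1) * i))"
  have qs: "(q - 1) * s = q ^ 4 - 1" and q4: "(q - 1) * (s - 1) + q = q ^ 4"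
    using q_ge_2 by (cases q; simp add: s_def eval_nat_numeral algebra_simps)+
  have "coeff G 0 = 1"
    using q_ge_2 by (simp add: G_def coeff_sum coeff_monom s_def sum.delta)
  hence G0: "G \<noteq> 0"
    by auto
  have "degree G \<le> (q - 1) * (s - 1)"
    unfolding G_def by (intro degree_sum_le) (auto intro!: order.trans[OF degree_monom_le])
  hence roots: "card {x. poly G x = 0} \<le> (q - 1) * (s - 1)"
    using card_poly_roots_bound[OF G0] by simp
  have "poly G x = 0" if "x \<notin> Fq" for x
  proof -
    let ?u = "x ^ (q - 1)"
    have "?u \<noteq> 1"
      using that power_q_eq[of x] by (auto simp: Fq_iff)
    moreover have "x * x ^ (q ^ 4 - 1) = x * 1"
      using power_q4[of x] q_ge_2 by (simp flip: power_Suc)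
    hence "x ^ (q ^ 4 - 1) = 1"
      using that by auto
    hence "?u ^ s = 1"
      by (simp only: power_mult[symmetric] qs)
    ultimately have "(\<Sum>i<s. ?u ^ i) = 0"
      by (simp add: geometric_sum)
    thus ?thesis
      by (simp add: G_def poly_sum poly_monom power_mult)
  qed
  hence "Fq \<union> {x. poly G x = 0} = UNIV"
    by auto
  hence "q ^ 4 = card (Fq \<union> {x. poly G x = 0})"
    using card_UNIV by simp
  also have "\<dots> \<le> card Fq + card {x. poly G x = 0}"
    by (rule card_Un_le)
  finally show ?thesis
    using roots q4 by linarith
qed

lemma card_Fq: "card Fq = q"
  using card_Fq_le card_Fq_ge by simp

definition trace :: "'a \<Rightarrow> 'a" where
  "trace x = x + x ^ q + x ^ q\<^sup>2 + x ^ q ^ 3"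

lemma trace_in_Fq: "trace x \<in> Fq"
  unfolding Fq_iff trace_def by (simp add: frobenius_add1 frobenius_compose algebra_simps)

lemma trace_add: "trace (x + y) = trace x + trace y"
  and trace_diff: "trace (x - y) = trace x - trace y"
  unfolding trace_def by (simp_all add: frobenius_add1 frobenius_add frobenius_diff1 frobenius_diff)

lemma trace_0 [simp]: "trace 0 = 0"
  using trace_diff[of 0 0] by simp

lemma trace_minus: "trace (- x) = - trace x"
  using trace_diff[of 0 x] by simp

lemma trace_scale: "t \<in> Fq \<Longrightarrow> trace (t * x) = t * trace x"
  unfolding trace_def using Fq_power_q_power[of t 2] Fq_power_q_power[of t 3]
  by (simp add: power_mult_distrib Fq_iff algebra_simps)

lemma trace_sum: "trace (sum f A) = (\<Sum>i\<in>A. trace (f i))"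
  by (induction A rule: infinite_finite_induct) (simp_all add: trace_add)

lemma trace_not_zero: "\<exists>x. trace x \<noteq> 0"
proof (rule ccontr)
  assume "\<not> (\<exists>x. trace x \<noteq> 0)"
  define P :: "'a poly" where "P = monom 1 1 + monom 1 q + monom 1 (q\<^sup>2) + monom 1 (q ^ 3)"
  have "q ^ 1 < q ^ 3" "q ^ 2 < q ^ 3"
    by (rule power_strict_increasing; use q_ge_2 in simp)+
  moreover have "1 < q ^ 3"
    by (rule one_less_power) (use q_ge_2 in simp_all)
  ultimately have lt: "1 < q ^ 3" "q < q ^ 3" "q\<^sup>2 < q ^ 3"
    by simp_all
  hence "coeff P (q ^ 3) = 1"
    by (simp add: P_def coeff_monom)
  hence P0: "P \<noteq> 0"
    by auto
  have "degree P \<le> q ^ 3"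
    unfolding P_def using lt by (intro degree_add_le order.trans[OF degree_monom_le]; simp)+
  moreover have "{x. poly P x = 0} = UNIV"
    using \<open>\<not> (\<exists>x. trace x \<noteq> 0)\<close> by (auto simp: P_def poly_monom trace_def)
  ultimately have "q ^ 4 \<le> q ^ 3"
    using card_poly_roots_bound[OF P0] card_UNIV by simp
  thus False
    using q_ge_2 power_strict_increasing[of 3 4 q] by simp
qed

lemma trace_nondegenerate: "(\<And>b. trace (b * z) = 0) \<Longrightarrow> z = 0"
  using trace_not_zero by (metis nonzero_divide_eq_eq)

lemma trace_eq_1: "\<exists>x. trace x = 1"
proof -
  obtain x where x: "trace x \<noteq> 0"
    using trace_not_zero by blast
  have "trace (inverse (trace x) * x) = 1"
    using x by (simp add: trace_scale Fq_inverse trace_in_Fq)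
  thus ?thesis ..
qed

lemma card_trace_kernel:
  assumes "w \<noteq> 0"
  shows "card {a. trace (a * w) = 0} = q ^ 3"
proof -
  obtain x where x: "trace x = 1"
    using trace_eq_1 by blast
  have "(\<lambda>a. trace (a * w)) ` UNIV = Fq"
  proof (intro equalityI subsetI)
    fix t assume "t \<in> Fq"
    hence "trace ((t * x / w) * w) = t"
      using assms x by (simp add: trace_scale)
    thus "t \<in> range (\<lambda>a. trace (a * w))"
      by (metis rangeI)
  qed (auto simp: trace_in_Fq)
  hence "card (UNIV :: 'a set) = card Fq * card {a \<in> UNIV. trace (a * w) = 0}"
    by (intro card_eq_card_image_mult_card_kernel) (simp_all add: distrib_right trace_add trace_minus)
  hence "q * q ^ 3 = q * card {a. trace (a * w) = 0}"
    by (simp add: card_UNIV card_Fq flip: power_Suc)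
  thus ?thesis
    using q_ge_2 by simp
qed

text \<open>With \<open>trace x = 1\<close> and \<open>c = trace (x w'/w)\<close>, the element \<open>b - trace b \<cdot> x\<close> lies in the kernel of
  \<open>trace (\<cdot> w)\<close> after division by \<open>w\<close>; hence \<open>w'/w - c\<close> is orthogonal to everything.\<close>

lemma ratio_in_Fq_if_trace_kernel_subset:
  assumes w: "w \<noteq> 0" and sub: "\<And>a. trace (a * w) = 0 \<Longrightarrow> trace (a * w') = 0"
  shows "w' / w \<in> Fq"
proof -
  obtain x where x: "trace x = 1"
    using trace_eq_1 by blast
  define c where "c = trace (x * (w' / w))"
  have c: "c \<in> Fq"
    by (simp add: c_def trace_in_Fq)
  have "trace (b * (w' / w - c)) = 0" for b
  proof -
    have "trace (((b - trace b * x) / w) * w) = 0"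
      using w x by (simp add: trace_diff trace_scale trace_in_Fq)
    hence "trace (((b - trace b * x) / w) * w') = 0"
      by (rule sub)
    moreover have "((b - trace b * x) / w) * w' = b * (w' / w) - trace b * (x * (w' / w))"
      by (simp add: diff_divide_distrib algebra_simps)
    ultimately have "trace (b * (w' / w)) - trace b * c = 0"
      by (simp only: trace_diff trace_scale[OF trace_in_Fq] c_def)
    moreover have "trace (b * (w' / w - c)) = trace (b * (w' / w)) - c * trace b"
      by (simp only: right_diff_distrib trace_diff mult.commute[of b c] trace_scale[OF c])
    ultimately show ?thesis
      by (simp add: mult.commute)
  qed
  hence "w' / w - c = 0"
    by (rule trace_nondegenerate)
  thus ?thesis
    using c by simp
qed

lemma card_trace_kernel2:
  assumes w: "w \<noteq> 0" and w': "w' / w \<notin> Fq"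
  shows "card {a. trace (a * w) = 0 \<and> trace (a * w') = 0} = q\<^sup>2"
proof -
  let ?H = "{a. trace (a * w) = 0}"
  obtain a0 where a0: "trace (a0 * w) = 0" "trace (a0 * w') \<noteq> 0"
    using ratio_in_Fq_if_trace_kernel_subset[OF w] w' by blast
  have "(\<lambda>a. trace (a * w')) ` ?H = Fq"
  proof (intro equalityI subsetI)
    fix t assume "t \<in> Fq"
    define c where "c = t / trace (a0 * w')"
    have "c \<in> Fq"
      using \<open>t \<in> Fq\<close> by (simp add: c_def Fq_divide trace_in_Fq)
    hence "trace ((c * a0) * v) = c * trace (a0 * v)" for v
      unfolding mult.assoc by (rule trace_scale)
    hence "trace ((c * a0) * w) = 0" "trace ((c * a0) * w') = t"
      using a0 by (simp_all add: c_def)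
    thus "t \<in> (\<lambda>a. trace (a * w')) ` ?H"
      by blast
  qed (auto simp: trace_in_Fq)
  hence "card ?H = card Fq * card {a \<in> ?H. trace (a * w') = 0}"
    by (intro card_eq_card_image_mult_card_kernel) (simp_all add: distrib_right trace_add trace_minus)
  hence "q * q\<^sup>2 = q * card {a. trace (a * w) = 0 \<and> trace (a * w') = 0}"
    using card_trace_kernel[OF w] by (simp add: card_Fq flip: power_Suc)
  thus ?thesis
    using q_ge_2 by simp
qed

lemma trace_eq_sum: "trace x = (\<Sum>e<4. x ^ q ^ e)"
  by (simp add: trace_def eval_nat_numeral)

definition rel_norm :: "'a \<Rightarrow> 'a" where
  "rel_norm x = x ^ q\<^sup>2 * x"

lemma rel_norm_mult: "rel_norm (x * y) = rel_norm x * rel_norm y"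
  by (simp add: rel_norm_def power_mult_distrib algebra_simps)

lemma rel_norm_divide: "rel_norm (x / y) = rel_norm x / rel_norm y"
  by (simp add: rel_norm_def power_divide)

lemma rel_norm_in_Fq: "t \<in> Fq \<Longrightarrow> rel_norm t \<in> Fq"
  by (simp add: rel_norm_def Fq_power_q_power Fq_mult)

lemma rel_norm_add_scaled:
  assumes "\<alpha> \<in> Fq" "\<beta> \<in> Fq"
  shows "rel_norm (\<alpha> + \<beta> * w) = \<alpha> * \<alpha> + \<alpha> * \<beta> * (w + w ^ q\<^sup>2) + \<beta> * \<beta> * rel_norm w"
proof -
  have "(\<alpha> + \<beta> * w) ^ q\<^sup>2 = \<alpha> + \<beta> * w ^ q\<^sup>2"
    using Fq_power_q_power[OF assms(1), of 2] Fq_power_q_power[OF assms(2), of 2]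
    by (simp add: frobenius_add power_mult_distrib)
  thus ?thesis
    by (simp add: rel_norm_def algebra_simps)
qed

text \<open>\<open>x\<^sup>q\<close> is a root of \<open>(X - x) (X - x\<^bsup>q\<^sup>2\<^esup>)\<close>, whose coefficients are the relative trace and norm.\<close>

lemma in_Fq_if_rel_norm_rel_trace_in_Fq:
  assumes N: "rel_norm x \<in> Fq" and T: "x + x ^ q\<^sup>2 \<in> Fq"
  shows "x \<in> Fq"
proof -
  have T': "x ^ q + x ^ q ^ 3 = x + x ^ q\<^sup>2"
    using T unfolding Fq_iff by (simp add: frobenius_add1 frobenius_compose)
  have N': "x ^ q ^ 3 * x ^ q = x ^ q\<^sup>2 * x"
    using N unfolding Fq_iff rel_norm_def by (simp add: power_mult_distrib frobenius_compose)
  have "(x ^ q - x) * (x ^ q - x ^ q\<^sup>2) = x ^ q * x ^ q - x ^ q * (x + x ^ q\<^sup>2) + x ^ q\<^sup>2 * x"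
    by (simp add: algebra_simps)
  also have "\<dots> = 0"
    unfolding T'[symmetric] N'[symmetric] by (simp add: algebra_simps)
  finally consider "x ^ q = x" | "x ^ q = x ^ q\<^sup>2"
    by auto
  thus ?thesis
  proof cases
    case 2
    hence "(x ^ q) ^ q ^ 3 = (x ^ q\<^sup>2) ^ q ^ 3"
      by simp
    thus ?thesis
      by (simp add: frobenius_compose Fq_iff)
  qed (simp add: Fq_iff)
qed

lemma frobenius_skew:
  assumes "(z :: 'a) ^ q\<^sup>2 = z"
  shows "(z - z ^ q) ^ q = - (z - z ^ q)"
proof -
  have "(z - z ^ q) ^ q = z ^ q - z ^ q\<^sup>2"
    by (simp add: frobenius_diff1 frobenius_compose)
  thus ?thesis
    using assms by simp
qed

lemma trace_skew:
  assumes "\<epsilon> ^ q = - \<epsilon>"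
  shows "trace (\<epsilon> * z) = \<epsilon> * ((z + z ^ q\<^sup>2) - (z + z ^ q\<^sup>2) ^ q)"
proof -
  have "\<epsilon> ^ q\<^sup>2 = \<epsilon>" "\<epsilon> ^ q ^ 3 = - \<epsilon>"
    using assms frobenius_compose(1,4)[of \<epsilon>] by (simp_all add: frobenius_minus1)
  thus ?thesis
    using assms by (simp add: trace_def power_mult_distrib frobenius_add1 frobenius_compose algebra_simps)
qed

definition frobenius_poly :: "'a poly \<Rightarrow> 'a poly" where
  "frobenius_poly P = map_poly (\<lambda>x. x ^ q) P"

lemma coeff_frobenius_poly: "coeff (frobenius_poly P) i = coeff P i ^ q"
  unfolding frobenius_poly_def using q_ge_2 by (subst coeff_map_poly) simp_all

lemma frobenius_poly_mult: "frobenius_poly (P * Q) = frobenius_poly P * frobenius_poly Q"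
  by (rule poly_eqI) (simp add: coeff_frobenius_poly coeff_mult frobenius_sum1 power_mult_distrib)

lemma frobenius_poly_1: "frobenius_poly 1 = 1"
  using q_ge_2 by (intro poly_eqI) (simp add: coeff_frobenius_poly coeff_1)

lemma frobenius_poly_prod: "frobenius_poly (\<Prod>x\<in>A. F x) = (\<Prod>x\<in>A. frobenius_poly (F x))"
  by (induction A rule: infinite_finite_induct) (simp_all add: frobenius_poly_1 frobenius_poly_mult)

lemma frobenius_poly_linear: "frobenius_poly [:- b, 1:] = [:- (b ^ q), 1:]"
  using q_ge_2 by (intro poly_eqI) (simp add: coeff_frobenius_poly coeff_pCons frobenius_minus1 split: nat.split)

lemma frobenius_poly_fixed_iff: "frobenius_poly P = P \<longleftrightarrow> (\<forall>i. coeff P i \<in> Fq)"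
  by (metis coeff_frobenius_poly Fq_iff poly_eqI)

lemma frobenius_poly_fixed_factor:
  assumes "frobenius_poly (A * G) = A * G" "frobenius_poly G = G" "G \<noteq> 0"
  shows "frobenius_poly A = A"
  using assms by (simp add: frobenius_poly_mult)

lemma poly_frobenius:
  assumes "\<forall>i<n. c i \<in> Fq"
  shows "poly (vec_poly n c) (x ^ q ^ e) = poly (vec_poly n c) x ^ q ^ e"
proof -
  have "poly (vec_poly n c) x ^ q ^ e = (\<Sum>i<n. c i ^ q ^ e * (x ^ i) ^ q ^ e)"
    by (simp add: poly_vec_poly frobenius_sum power_mult_distrib)
  also have "\<dots> = (\<Sum>i<n. c i * (x ^ q ^ e) ^ i)"
    using assms by (intro sum.cong refl) (simp add: Fq_power_q_power power_commute_exponents)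
  finally show ?thesis
    by (simp add: poly_vec_poly)
qed

lemma inj_on_conjugates:
  assumes "\<And>d. 0 < d \<Longrightarrow> d < 4 \<Longrightarrow> (x :: 'a) ^ q ^ d \<noteq> x"
  shows "inj_on (\<lambda>e. x ^ q ^ e) {..<4}"
proof -
  have less: "e = f" if "e < f" "f < 4" "x ^ q ^ e = x ^ q ^ f" for e f
  proof -
    have "x ^ q ^ (e + (4 - f)) = (x ^ q ^ e) ^ q ^ (4 - f)"
      by (simp only: power_add power_mult)
    also have "\<dots> = (x ^ q ^ f) ^ q ^ (4 - f)"
      using that(3) by simp
    also have "\<dots> = x ^ q ^ (f + (4 - f))"
      by (simp only: power_add power_mult)
    also have "\<dots> = x"
      using that(2) power_q4[of x] by simp
    finally have "x ^ q ^ (e + (4 - f)) = x" .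
    moreover have "0 < e + (4 - f)" "e + (4 - f) < 4"
      using that(1,2) by auto
    ultimately show ?thesis
      using assms[of "e + (4 - f)"] by simp
  qed
  show ?thesis
  proof (rule inj_onI)
    fix e f assume "e \<in> {..<4::nat}" "f \<in> {..<4::nat}" "x ^ q ^ e = x ^ q ^ f"
    thus "e = f"
      using less[of e f] less[of f e] by (cases e f rule: linorder_cases) auto
  qed
qed

end

section \<open>The setting of the theorem\<close>

locale ovoid_code = quartic_field p m q for p m q :: nat +
  fixes n r :: nat and lam \<delta> :: "'a::{field,finite}"
  assumes q_gt_2: "q > 2" and n_def: "n = q\<^sup>2 + 1"
    and r_dvd: "r dvd q - 1" and multiplicity_r: "multiplicity 2 r = multiplicity 2 (q - 1)"
    and mult_ord_delta: "mult_ord \<delta> = r * n" and delta_power_n: "\<delta> ^ n = lam"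
begin

lemma n_ge_4: "n \<ge> 4"
  using q_ge_2 power_mono[of 2 q 2] by (simp add: n_def)

lemma r_pos: "r > 0"
  using r_dvd q_gt_2 by (cases "r = 0") auto

lemma mult_ord_delta_pos: "mult_ord \<delta> > 0"
  using r_pos by (simp add: mult_ord_delta n_def)

lemma delta_power_eq_1_iff: "\<delta> ^ k = 1 \<longleftrightarrow> r * n dvd k"
  using power_eq_1_iff_mult_ord_dvd[OF mult_ord_delta_pos] by (simp add: mult_ord_delta)

lemma delta_power_rn [simp]: "\<delta> ^ (r * n) = 1"
  by (simp add: delta_power_eq_1_iff)

lemma delta_nonzero: "\<delta> \<noteq> 0"
proof
  assume "\<delta> = 0"
  hence "(0 :: 'a) ^ (r * n) = 1"
    using delta_power_rn by simp
  thus False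
    using r_pos by (simp add: power_0_left n_def)
qed

lemma lam_nonzero: "lam \<noteq> 0"
  using delta_nonzero delta_power_n by auto

lemma delta_power_cong:
  assumes "a mod (r * n) = b mod (r * n)"
  shows "\<delta> ^ a = \<delta> ^ b"
proof -
  have "\<delta> ^ a = \<delta> ^ (a mod (r * n))" for a
  proof -
    have "\<delta> ^ a = \<delta> ^ (a mod (r * n)) * (\<delta> ^ (r * n)) ^ (a div (r * n))"
      by (simp only: power_mult[symmetric] power_add[symmetric] mod_mult_div_eq)
    thus ?thesis
      by simp
  qed
  from this[of a] this[of b] show ?thesis
    using assms by simp
qed

lemma lam_in_Fq: "lam \<in> Fq"
proof -
  have "lam ^ (q - 1) = \<delta> ^ (n * (q - 1))"
    by (simp add: power_mult delta_power_n)
  also have "\<dots> = 1"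
    using r_dvd by (simp add: delta_power_eq_1_iff mult.commute)
  finally show ?thesis
    using power_q_eq[of lam] by (simp add: Fq_iff)
qed

definition \<theta> :: 'a where
  "\<theta> = inverse \<delta>"

lemma theta_nonzero: "\<theta> \<noteq> 0"
  using delta_nonzero by (simp add: \<theta>_def)

lemma theta_power_eq_1_iff: "\<theta> ^ k = 1 \<longleftrightarrow> r * n dvd k"
  by (simp add: \<theta>_def power_inverse delta_power_eq_1_iff)

lemma theta_power_n: "\<theta> ^ n = inverse lam"
  by (simp add: \<theta>_def power_inverse delta_power_n)

lemma rel_norm_theta_power: "rel_norm (\<theta> ^ k) \<in> Fq"
proof -
  have "rel_norm (\<theta> ^ k) = (\<theta> ^ q\<^sup>2 * \<theta>) ^ k"
    by (simp add: rel_norm_def power_commute_exponents[of \<theta> k] power_mult_distrib)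
  also have "\<theta> ^ q\<^sup>2 * \<theta> = inverse lam"
    using theta_power_n by (simp add: n_def mult.commute)
  finally show ?thesis
    by (simp add: Fq_power Fq_inverse lam_in_Fq)
qed

text \<open>\<open>\<theta>\<^sup>k \<in> F\<^sub>q\<close> means that \<open>r n\<close> divides \<open>k (q - 1) = k r s\<close> with \<open>s\<close> odd, and \<open>s\<close> is prime
  to \<open>n = q\<^sup>2 + 1\<close>.\<close>

lemma theta_power_in_Fq_iff:
  assumes "k < n"
  shows "\<theta> ^ k \<in> Fq \<longleftrightarrow> k = 0"
proof
  assume "\<theta> ^ k \<in> Fq"
  hence "(\<theta> ^ k) ^ (q - 1) = 1"
    using power_q_eq[of "\<theta> ^ k"] theta_nonzero by (simp add: Fq_iff)
  hence dvd: "r * n dvd k * (q - 1)"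
    by (simp add: theta_power_eq_1_iff flip: power_mult)
  obtain s where s: "q - 1 = r * s"
    using r_dvd by blast
  have "odd s"
    by (rule odd_cofactor_if_same_multiplicity_2[OF s _ multiplicity_r]) (use q_gt_2 in simp)
  hence "coprime n s"
    unfolding n_def using s q_ge_2 by (intro coprime_square_plus_1_odd_divisor) auto
  moreover have "n dvd k * s"
    using dvd r_pos unfolding s by (simp add: mult.left_commute[of k])
  ultimately have "n dvd k"
    by (simp add: coprime_dvd_mult_left_iff coprime_commute)
  thus "k = 0"
    using assms by (auto dest: dvd_imp_le)
qed simp

lemma theta_powers_independent:
  assumes "i < n" "j < n" "\<theta> ^ j / \<theta> ^ i \<in> Fq"
  shows "i = j"
proof (cases i j rule: linorder_le_cases)
  case le
  hence "\<theta> ^ (j - i) \<in> Fq"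
    using assms(3) theta_nonzero by (simp add: power_diff)
  thus ?thesis
    using assms(2) le theta_power_in_Fq_iff[of "j - i"] by simp
next
  case ge
  hence "\<theta> ^ (i - j) \<in> Fq"
    using Fq_inverse[OF assms(3)] theta_nonzero by (simp add: power_diff)
  thus ?thesis
    using assms(1) ge theta_power_in_Fq_iff[of "i - j"] by simp
qed

lemma delta_conjugate_ne:
  assumes "0 < d" "d < 4"
  shows "\<delta> ^ q ^ d \<noteq> \<delta>"
proof
  assume "\<delta> ^ q ^ d = \<delta>"
  hence "\<delta> * \<delta> ^ (q ^ d - 1) = \<delta> * 1"
    using q_ge_2 by (simp flip: power_Suc)
  hence "\<delta> ^ (q ^ d - 1) = 1"
    using delta_nonzero by simp
  hence "n dvd q ^ d - 1"
    by (simp add: delta_power_eq_1_iff dvd_mult_right)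
  moreover have "q < q\<^sup>2" "q\<^sup>2 < q ^ 3"
    using q_ge_2 by (simp_all add: power2_eq_square power3_eq_cube)
  ultimately consider "n dvd q - 1" | "n dvd q\<^sup>2 - 1" | "n dvd q ^ 3 - 1"
    using assms by (cases d) (auto simp: numeral_eq_Suc less_Suc_eq)
  thus False
  proof cases
    case 3
    have "q * n = (q ^ 3 - 1) + (q + 1)"
      using q_ge_2 by (simp add: n_def algebra_simps power2_eq_square power3_eq_cube)
    hence "n dvd q + 1"
      using 3 by (metis dvd_add_right_iff dvd_triv_right)
    thus False
      using \<open>q < q\<^sup>2\<close> q_ge_2 by (auto dest!: dvd_imp_le simp: n_def)
  qed (use \<open>q < q\<^sup>2\<close> q_ge_2 in \<open>auto dest!: dvd_imp_le simp: n_def\<close>)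
qed

lemma theta_conjugate_ne: "0 < d \<Longrightarrow> d < 4 \<Longrightarrow> \<theta> ^ q ^ d \<noteq> \<theta>"
  using delta_conjugate_ne by (simp add: \<theta>_def power_inverse)

definition xn_minus_lam :: "'a poly" where
  "xn_minus_lam = monom 1 n - [:lam:]"

definition delta_conjugates :: "'a set" where
  "delta_conjugates = (\<lambda>e. \<delta> ^ q ^ e) ` {..<4}"

definition check_poly :: "'a poly" where
  "check_poly = (\<Prod>b\<in>delta_conjugates. [:- b, 1:])"

definition gen_poly :: "'a poly" where
  "gen_poly = xn_minus_lam div check_poly"

lemma poly_xn_minus_lam: "poly xn_minus_lam x = x ^ n - lam"
  by (simp add: xn_minus_lam_def poly_monom)

lemma coeff_xn_minus_lam: "coeff xn_minus_lam i = (if i = n then 1 else 0) - (if i = 0 then lam else 0)"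
  by (simp add: xn_minus_lam_def coeff_monom coeff_pCons split: nat.split)

lemma degree_xn_minus_lam: "degree xn_minus_lam = n"
  and lead_coeff_xn_minus_lam: "lead_coeff xn_minus_lam = 1"
proof -
  have "coeff xn_minus_lam n = 1"
    using n_ge_4 by (simp add: coeff_xn_minus_lam)
  moreover have "degree xn_minus_lam \<le> n"
    by (auto simp: xn_minus_lam_def intro!: degree_diff_le degree_monom_le)
  ultimately show "degree xn_minus_lam = n"
    by (metis le_antisym le_degree one_neq_zero)
  thus "lead_coeff xn_minus_lam = 1"
    using \<open>coeff xn_minus_lam n = 1\<close> by simp
qed

lemma xn_minus_lam_nonzero: "xn_minus_lam \<noteq> 0"
  using lead_coeff_xn_minus_lam by auto

definition lam_roots :: "'a set" where
  "lam_roots = (\<lambda>j. \<delta> ^ (1 + r * j)) ` {..<n}"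

lemma lam_roots_power_n: "z \<in> lam_roots \<Longrightarrow> z ^ n = lam"
proof -
  assume "z \<in> lam_roots"
  then obtain j where "z = \<delta> ^ (1 + r * j)"
    by (auto simp: lam_roots_def)
  hence "z ^ n = \<delta> ^ n * (\<delta> ^ (r * n)) ^ j"
    by (simp add: power_mult[symmetric] power_add[symmetric] algebra_simps)
  thus ?thesis
    by (simp add: delta_power_n)
qed

lemma card_lam_roots: "card lam_roots = n"
proof -
  have "i = j" if "i < n" "j < n" "i \<le> j" "\<delta> ^ (1 + r * i) = \<delta> ^ (1 + r * j)" for i j
  proof -
    have "\<delta> ^ (1 + r * j) = \<delta> ^ (1 + r * i) * \<delta> ^ (r * (j - i))"
      using that(3) by (simp add: power_add[symmetric] diff_mult_distrib2)
    hence "\<delta> ^ (r * (j - i)) = 1"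
      using that(4) delta_nonzero by simp
    hence "n dvd j - i"
      using r_pos by (simp add: delta_power_eq_1_iff)
    thus ?thesis
      using that(1-3) by (auto dest: dvd_imp_le)
  qed
  hence "inj_on (\<lambda>j. \<delta> ^ (1 + r * j)) {..<n}"
    by (intro inj_onI) (metis lessThan_iff nat_le_linear)
  thus ?thesis
    by (simp add: lam_roots_def card_image)
qed

lemma xn_minus_lam_eq_prod: "xn_minus_lam = (\<Prod>z\<in>lam_roots. [:- z, 1:])"
proof (rule sym, rule monic_dvd_eqI)
  show "(\<Prod>z\<in>lam_roots. [:- z, 1:]) dvd xn_minus_lam"
    by (rule prod_linear_factors_dvd) (simp_all add: lam_roots_def poly_xn_minus_lam lam_roots_power_n)
  show "degree (\<Prod>z\<in>lam_roots. [:- z, 1:]) = degree xn_minus_lam"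
    by (simp add: degree_prod_eq_sum_degree card_lam_roots degree_xn_minus_lam)
  show "lead_coeff (\<Prod>z\<in>lam_roots. [:- z, 1:]) = 1"
    by (subst lead_coeff_prod) simp
qed (simp_all add: xn_minus_lam_nonzero lead_coeff_xn_minus_lam)

lemma delta_conjugate_power_n: "(\<delta> ^ q ^ e) ^ n = lam"
  using delta_power_n Fq_power_q_power[OF lam_in_Fq] by (simp add: power_commute_exponents)

lemma check_poly_dvd: "check_poly dvd xn_minus_lam"
  unfolding check_poly_def
  by (rule prod_linear_factors_dvd) (auto simp: poly_xn_minus_lam delta_conjugates_def delta_conjugate_power_n)

lemma xn_minus_lam_eq_mult: "xn_minus_lam = gen_poly * check_poly"
  using check_poly_dvd by (simp add: gen_poly_def)

lemma check_poly_nonzero: "check_poly \<noteq> 0" and gen_poly_nonzero: "gen_poly \<noteq> 0"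
  using xn_minus_lam_eq_mult xn_minus_lam_nonzero by auto

lemma poly_check_poly_eq_0_iff: "poly check_poly z = 0 \<longleftrightarrow> z \<in> delta_conjugates"
  by (simp add: check_poly_def poly_prod)

lemma poly_gen_poly:
  assumes "z \<in> lam_roots" "z \<notin> delta_conjugates"
  shows "poly gen_poly z = 0"
  using assms lam_roots_power_n[OF assms(1)] xn_minus_lam_eq_mult poly_check_poly_eq_0_iff
  by (metis mult_eq_0_iff poly_mult poly_xn_minus_lam right_minus_eq)

lemma frobenius_poly_check_poly: "frobenius_poly check_poly = check_poly"
proof -
  have "(\<lambda>b. b ^ q) ` delta_conjugates \<subseteq> delta_conjugates"
  proof
    fix y assume "y \<in> (\<lambda>b. b ^ q) ` delta_conjugates"
    then obtain e where e: "e < 4" "y = \<delta> ^ q ^ Suc e"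
      by (auto simp: delta_conjugates_def power_mult[symmetric] mult.commute)
    show "y \<in> delta_conjugates"
    proof (cases "e = 3")
      case True
      thus ?thesis
        using e power_q4[of \<delta>] by (auto simp: delta_conjugates_def intro!: image_eqI[of _ _ 0])
    next
      case False
      thus ?thesis
        using e unfolding delta_conjugates_def by (intro image_eqI[of _ _ "Suc e"]) auto
    qed
  qed
  moreover have inj: "inj_on (\<lambda>b. b ^ q) delta_conjugates"
    by (metis frobenius_compose(3) inj_on_inverseI)
  ultimately have "(\<lambda>b. b ^ q) ` delta_conjugates = delta_conjugates"
    by (simp add: card_subset_eq card_image)
  hence "(\<Prod>b\<in>delta_conjugates. [:- (b ^ q), 1:]) = check_poly"
    using prod.reindex[OF inj, of "\<lambda>b. [:- b, 1:]"] by (simp add: check_poly_def)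
  thus ?thesis
    by (simp add: check_poly_def frobenius_poly_prod frobenius_poly_linear)
qed

lemma frobenius_poly_gen_poly: "frobenius_poly gen_poly = gen_poly"
proof -
  have "frobenius_poly xn_minus_lam = xn_minus_lam"
    by (simp add: frobenius_poly_fixed_iff coeff_xn_minus_lam Fq_diff lam_in_Fq)
  thus ?thesis
    using frobenius_poly_fixed_factor[of gen_poly check_poly] check_poly_nonzero
    by (simp add: frobenius_poly_check_poly xn_minus_lam_eq_mult)
qed

lemma check_poly_eq:
  "check_poly = [:- \<delta>, 1:] * [:- (\<delta> ^ q\<^sup>2), 1:] *
     ([:- (\<delta> ^ (q\<^sup>2 - q + 1)), 1:] * [:- (\<delta> ^ (q ^ 4 - q ^ 3 + q\<^sup>2)), 1:])"
proof -
  obtain s where s: "q - 1 = r * s"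
    using r_dvd by blast
  define k where "k = q - 1"
  have k: "q = k + 1"
    using q_ge_2 by (simp add: k_def)
  have "q ^ 3 = (q\<^sup>2 - q + 1) + (q - 1) * n" "q ^ 4 - q ^ 3 + q\<^sup>2 = q + q * ((q - 1) * n)"
    unfolding n_def k by (simp_all add: power2_eq_square power3_eq_cube eval_nat_numeral algebra_simps)
  hence "q ^ 3 = (q\<^sup>2 - q + 1) + s * (r * n)" "q ^ 4 - q ^ 3 + q\<^sup>2 = q + (q * s) * (r * n)"
    unfolding s by (simp_all add: ac_simps)
  hence "(q\<^sup>2 - q + 1) mod (r * n) = q ^ 3 mod (r * n)"
    "(q ^ 4 - q ^ 3 + q\<^sup>2) mod (r * n) = q mod (r * n)"
    by simp_all
  hence "\<delta> ^ (q\<^sup>2 - q + 1) = \<delta> ^ q ^ 3" "\<delta> ^ (q ^ 4 - q ^ 3 + q\<^sup>2) = \<delta> ^ q"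
    using delta_power_cong by blast+
  moreover have "check_poly = prod ((\<lambda>b. [:- b, 1:]) \<circ> (\<lambda>e. \<delta> ^ q ^ e)) {..<4}"
    unfolding check_poly_def delta_conjugates_def
    by (rule prod.reindex[OF inj_on_conjugates[OF delta_conjugate_ne]])
  moreover have "prod h {..<4::nat} = h 0 * h 1 * h 2 * h 3" for h :: "nat \<Rightarrow> 'a poly"
    by (simp add: eval_nat_numeral lessThan_Suc mult_ac)
  ultimately show ?thesis
    by (simp only: comp_apply power_0 power_one_right mult_ac)
qed

section \<open>The subfield subcode as a trace code\<close>

definition trace_codeword :: "'a \<Rightarrow> nat \<Rightarrow> 'a" where
  "trace_codeword a i = (if i < n then trace (a * \<theta> ^ i) else 0)"

definition subcode :: "(nat \<Rightarrow> 'a) set" where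
  "subcode = subfield_subcode n (constacyclic_code_chk (Fsub (q\<^sup>2)) n lam check_poly) Fq"

lemma poly_trace_codeword:
  "poly (vec_poly n (trace_codeword a)) z = (\<Sum>e<4. a ^ q ^ e * (\<Sum>i<n. (\<theta> ^ q ^ e * z) ^ i))"
proof -
  have "poly (vec_poly n (trace_codeword a)) z = (\<Sum>i<n. \<Sum>e<4. a ^ q ^ e * (\<theta> ^ q ^ e * z) ^ i)"
    by (simp add: poly_vec_poly trace_codeword_def trace_eq_sum sum_distrib_right
        power_mult_distrib power_commute_exponents mult.assoc)
  thus ?thesis
    by (simp add: sum.swap[of _ "{..<n}"] sum_distrib_left)
qed

lemma theta_conjugate_mult_power_n:
  assumes "z ^ n = lam"
  shows "(\<theta> ^ q ^ e * z) ^ n = 1"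
proof -
  have "(\<theta> ^ q ^ e) ^ n = inverse lam"
    using Fq_power_q_power[OF Fq_inverse[OF lam_in_Fq]] theta_power_n
    by (simp add: power_commute_exponents)
  thus ?thesis
    using assms lam_nonzero by (simp add: power_mult_distrib)
qed

lemma theta_conjugate_mult_eq_1_iff: "\<theta> ^ q ^ e * z = 1 \<longleftrightarrow> z = \<delta> ^ q ^ e"
  using delta_nonzero by (auto simp: \<theta>_def power_inverse field_simps)

lemma poly_trace_codeword_lam_root:
  assumes "z ^ n = lam" "z \<notin> delta_conjugates"
  shows "poly (vec_poly n (trace_codeword a)) z = 0"
proof -
  have "(\<Sum>i<n. (\<theta> ^ q ^ e * z) ^ i) = 0" if "e < 4" for e
    using assms that theta_conjugate_mult_power_n[OF assms(1)] theta_conjugate_mult_eq_1_iff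
    by (subst geometric_sum) (auto simp: delta_conjugates_def)
  thus ?thesis
    by (simp add: poly_trace_codeword)
qed

lemma poly_trace_codeword_delta: "poly (vec_poly n (trace_codeword a)) \<delta> = a"
proof -
  have "(\<Sum>i<n. (\<theta> ^ q ^ e * \<delta>) ^ i) = (if e = 0 then 1 else 0)" if "e < 4" for e
  proof (cases "e = 0")
    case True
    have "of_nat n = (1 :: 'a)"
      using of_nat_q by (simp add: n_def power2_eq_square)
    thus ?thesis
      using True delta_nonzero by (simp add: \<theta>_def)
  next
    case False
    thus ?thesis
      using that delta_conjugate_ne[of e] theta_conjugate_mult_power_n[OF delta_power_n]
        theta_conjugate_mult_eq_1_iff by (subst geometric_sum) auto
  qed
  hence "(\<Sum>e<4. a ^ q ^ e * (\<Sum>i<n. (\<theta> ^ q ^ e * \<delta>) ^ i)) = (\<Sum>e<4::nat. if e = 0 then a else 0)"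
    by (intro sum.cong refl) simp
  thus ?thesis
    by (simp add: poly_trace_codeword)
qed

lemma inj_trace_codeword: "inj trace_codeword"
  by (metis injI poly_trace_codeword_delta)

lemma code_vanishes:
  assumes "c \<in> constacyclic_code_chk K n lam check_poly" "z \<in> lam_roots" "z \<notin> delta_conjugates"
  shows "poly (vec_poly n c) z = 0"
proof -
  obtain A where "vec_poly n c = (A * gen_poly) mod xn_minus_lam"
    using assms(1) by (auto simp: constacyclic_code_chk_def gen_poly_def xn_minus_lam_def)
  hence "vec_poly n c = A * gen_poly - (A * gen_poly) div xn_minus_lam * xn_minus_lam"
    by (simp add: minus_div_mult_eq_mod)
  thus ?thesis
    using poly_gen_poly[OF assms(2,3)] lam_roots_power_n[OF assms(2)] by (simp add: poly_xn_minus_lam)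
qed

lemma trace_codeword_in_code: "trace_codeword a \<in> constacyclic_code_chk (Fsub (q\<^sup>2)) n lam check_poly"
proof -
  let ?P = "vec_poly n (trace_codeword a)"
  have "xn_minus_lam dvd ?P * check_poly"
    unfolding xn_minus_lam_eq_prod
  proof (rule prod_linear_factors_dvd)
    fix z assume "z \<in> lam_roots"
    thus "poly (?P * check_poly) z = 0"
      using poly_check_poly_eq_0_iff poly_trace_codeword_lam_root lam_roots_power_n by auto
  qed simp
  hence "gen_poly dvd ?P"
    using check_poly_nonzero by (simp add: xn_minus_lam_eq_mult)
  then obtain A where "?P = gen_poly * A"
    by (elim dvdE)
  hence A: "?P = A * gen_poly"
    by (simp add: mult.commute)
  have "frobenius_poly ?P = ?P"
    by (simp add: frobenius_poly_fixed_iff coeff_vec_poly trace_codeword_def trace_in_Fq)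
  hence "frobenius_poly A = A"
    using frobenius_poly_fixed_factor[of A gen_poly] frobenius_poly_gen_poly gen_poly_nonzero
    by (simp add: A)
  hence A_coeffs: "\<forall>i. coeff A i \<in> Fsub (q\<^sup>2)"
    using Fq_subset_Fsub_q2 by (auto simp: frobenius_poly_fixed_iff)
  have A_mod: "?P = (A * gen_poly) mod xn_minus_lam"
    unfolding A[symmetric] using n_ge_4
    by (intro mod_poly_less[symmetric]) (simp add: degree_xn_minus_lam degree_vec_poly_less)
  have "\<forall>i<n. trace_codeword a i \<in> Fsub (q\<^sup>2)" "\<forall>i\<ge>n. trace_codeword a i = 0"
    using trace_in_Fq Fq_subset_Fsub_q2 by (auto simp: trace_codeword_def)
  with A_coeffs A_mod show ?thesis
    unfolding constacyclic_code_chk_def Let_def xn_minus_lam_def[symmetric] gen_poly_def[symmetric]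
    by blast
qed

text \<open>A word \<open>c\<close> of the subcode agrees with \<open>trace_codeword a\<close>,
  \<open>a = c(\<delta>)\<close>, at \<open>\<delta>\<close>, hence at its conjugates as both have coefficients in \<open>F\<^sub>q\<close>, and at the other
  roots of \<open>X\<^sup>n - \<lambda>\<close> both vanish; a word of length \<open>n\<close> is determined by its values at \<open>n\<close> points.\<close>

lemma subcode_word_eq_trace_codeword:
  assumes "c \<in> subcode"
  shows "c = trace_codeword (poly (vec_poly n c) \<delta>)"
proof -
  have c: "c \<in> constacyclic_code_chk (Fsub (q\<^sup>2)) n lam check_poly" "\<forall>i<n. c i \<in> Fq"
    using assms by (auto simp: subcode_def subfield_subcode_def)
  define a where "a = poly (vec_poly n c) \<delta>"
  define d where "d = (\<lambda>i. c i - trace_codeword a i)"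
  have d_Fq: "\<forall>i<n. d i \<in> Fq"
    using c(2) by (simp add: d_def Fq_diff trace_codeword_def trace_in_Fq)
  have vec_d: "vec_poly n d = vec_poly n c - vec_poly n (trace_codeword a)"
    unfolding d_def by (rule vec_poly_diff)
  have d_roots: "poly (vec_poly n d) z = 0" if "z \<in> lam_roots" for z
  proof (cases "z \<in> delta_conjugates")
    case True
    then obtain e where z: "z = \<delta> ^ q ^ e"
      by (auto simp: delta_conjugates_def)
    have "poly (vec_poly n d) z = poly (vec_poly n d) \<delta> ^ q ^ e"
      unfolding z by (rule poly_frobenius[OF d_Fq])
    moreover have "poly (vec_poly n d) \<delta> = 0"
      by (simp add: vec_d poly_trace_codeword_delta a_def)
    ultimately show ?thesis
      using q_ge_2 by simp
  next
    case False
    thus ?thesis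
      using code_vanishes[OF c(1) that] poly_trace_codeword_lam_root lam_roots_power_n[OF that]
      by (simp add: vec_d)
  qed
  have "d i = 0" if "i < n" for i
    by (rule vec_poly_eq_0_if_roots[of lam_roots n]) (simp_all add: d_roots card_lam_roots that)
  moreover have "c i = 0" if "i \<ge> n" for i
    using c(1) that by (simp add: constacyclic_code_chk_def)
  ultimately show ?thesis
    by (auto simp: a_def d_def trace_codeword_def fun_eq_iff not_less)
qed

lemma subcode_eq_range: "subcode = range trace_codeword"
  using subcode_word_eq_trace_codeword trace_codeword_in_code trace_in_Fq
  by (fastforce simp: subcode_def subfield_subcode_def trace_codeword_def)

lemma card_subcode: "card subcode = q ^ 4"
  using card_image[OF inj_trace_codeword] card_UNIV by (simp add: subcode_eq_range)

section \<open>Weights of the subfield subcode\<close>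

definition zero_count :: "'a \<Rightarrow> nat" where
  "zero_count a = card {i \<in> {..<n}. trace (a * \<theta> ^ i) = 0}"

lemma hamming_wt_trace_codeword: "hamming_wt n (trace_codeword a) = n - zero_count a"
proof -
  have "{i \<in> {..<n}. trace_codeword a i \<noteq> 0} = {..<n} - {i \<in> {..<n}. trace (a * \<theta> ^ i) = 0}"
    by (auto simp: trace_codeword_def)
  hence "hamming_wt n (trace_codeword a) = card ({..<n} - {i \<in> {..<n}. trace (a * \<theta> ^ i) = 0})"
    by (simp add: hamming_wt_def)
  also have "\<dots> = n - zero_count a"
    unfolding zero_count_def by (subst card_Diff_subset) auto
  finally show ?thesis .
qed

lemma zero_count_0: "zero_count 0 = n"
  by (simp add: zero_count_def)

lemma zero_count_eq_sum: "zero_count a = (\<Sum>i<n. if trace (a * \<theta> ^ i) = 0 then 1 else 0)"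
  by (simp add: zero_count_def sum.If_cases Int_def)

lemma sum_zero_count: "(\<Sum>a\<in>UNIV. zero_count a) = n * q ^ 3"
proof -
  have "(\<Sum>a\<in>UNIV. zero_count a) = (\<Sum>i<n. card {a. trace (a * \<theta> ^ i) = 0})"
    unfolding zero_count_eq_sum by (subst sum.swap) (simp add: sum.If_cases)
  also have "\<dots> = (\<Sum>i<n. q ^ 3)"
    using theta_nonzero by (intro sum.cong refl card_trace_kernel) simp
  finally show ?thesis
    by simp
qed

lemma sum_zero_count_squared: "(\<Sum>a\<in>UNIV. zero_count a ^ 2) = n * q ^ 3 + n * (n - 1) * q\<^sup>2"
proof -
  have "zero_count a ^ 2 =
      (\<Sum>i<n. \<Sum>j<n. if trace (a * \<theta> ^ i) = 0 \<and> trace (a * \<theta> ^ j) = 0 then 1 else 0)" for a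
    unfolding zero_count_eq_sum power2_eq_square sum_product by (intro sum.cong refl) auto
  hence "(\<Sum>a\<in>UNIV. zero_count a ^ 2) = (\<Sum>i<n. \<Sum>j<n. \<Sum>a\<in>UNIV.
      if trace (a * \<theta> ^ i) = 0 \<and> trace (a * \<theta> ^ j) = 0 then 1 else 0)"
    by (simp only:) (subst sum.swap, intro sum.cong refl, rule sum.swap)
  also have "\<dots> = (\<Sum>i<n. \<Sum>j<n. card {a. trace (a * \<theta> ^ i) = 0 \<and> trace (a * \<theta> ^ j) = 0})"
    by (simp add: sum.If_cases)
  also have "\<dots> = (\<Sum>i<n. q ^ 3 + (n - 1) * q\<^sup>2)"
  proof (rule sum.cong[OF refl])
    fix i assume i: "i \<in> {..<n}"
    have "card {a. trace (a * \<theta> ^ i) = 0 \<and> trace (a * \<theta> ^ j) = 0} = q\<^sup>2" if "j \<in> {..<n} - {i}" for j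
      using that i theta_powers_independent[of i j] theta_nonzero by (intro card_trace_kernel2) auto
    hence "(\<Sum>j<n. card {a. trace (a * \<theta> ^ i) = 0 \<and> trace (a * \<theta> ^ j) = 0}) = q ^ 3 + (\<Sum>j\<in>{..<n} - {i}. q\<^sup>2)"
      using i theta_nonzero by (simp add: sum.remove[of _ i] card_trace_kernel)
    also have "\<dots> = q ^ 3 + (n - 1) * q\<^sup>2"
      using i by simp
    finally show "(\<Sum>j<n. card {a. trace (a * \<theta> ^ i) = 0 \<and> trace (a * \<theta> ^ j) = 0}) = q ^ 3 + (n - 1) * q\<^sup>2" .
  qed
  finally show ?thesis
    by (simp add: algebra_simps)
qed

lemma rel_trace_theta_powers_in_Fq_iff:
  assumes "i < n" "j < n"
  shows "(\<theta> ^ i) ^ q\<^sup>2 * \<theta> ^ j + \<theta> ^ i * (\<theta> ^ j) ^ q\<^sup>2 \<in> Fq \<longleftrightarrow> j = i"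
proof
  let ?x = "\<theta> ^ i" and ?y = "\<theta> ^ j"
  assume u: "?x ^ q\<^sup>2 * ?y + ?x * ?y ^ q\<^sup>2 \<in> Fq"
  define w where "w = ?y / ?x"
  have x: "?x \<noteq> 0" "?x ^ q\<^sup>2 \<noteq> 0" "rel_norm ?x \<noteq> 0"
    using theta_nonzero by (simp_all add: rel_norm_def)
  have "w + w ^ q\<^sup>2 = (?x ^ q\<^sup>2 * ?y + ?x * ?y ^ q\<^sup>2) / rel_norm ?x"
    using x by (simp add: w_def power_divide rel_norm_def field_simps)
  hence "w + w ^ q\<^sup>2 \<in> Fq"
    using u rel_norm_theta_power by (simp add: Fq_divide)
  moreover have "rel_norm w \<in> Fq"
    unfolding w_def rel_norm_divide by (intro Fq_divide rel_norm_theta_power)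
  ultimately have "w \<in> Fq"
    using in_Fq_if_rel_norm_rel_trace_in_Fq by blast
  thus "j = i"
    using theta_powers_independent[OF assms] by (simp add: w_def)
next
  assume "j = i"
  hence "(\<theta> ^ i) ^ q\<^sup>2 * \<theta> ^ j + \<theta> ^ i * (\<theta> ^ j) ^ q\<^sup>2 = of_nat 2 * rel_norm (\<theta> ^ i)"
    by (simp add: rel_norm_def algebra_simps)
  thus "(\<theta> ^ i) ^ q\<^sup>2 * \<theta> ^ j + \<theta> ^ i * (\<theta> ^ j) ^ q\<^sup>2 \<in> Fq"
    by (simp only: Fq_mult Fq_of_nat rel_norm_theta_power)
qed

definition \<epsilon> :: 'a where
  "\<epsilon> = (\<theta> + \<theta> ^ q\<^sup>2) - (\<theta> + \<theta> ^ q\<^sup>2) ^ q"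

lemma epsilon_power_q: "\<epsilon> ^ q = - \<epsilon>"
  unfolding \<epsilon>_def by (rule frobenius_skew) (simp add: frobenius_add frobenius_compose)

lemma epsilon_nonzero: "\<epsilon> \<noteq> 0"
proof
  assume "\<epsilon> = 0"
  hence "\<theta> + \<theta> ^ q\<^sup>2 \<in> Fq"
    by (simp add: \<epsilon>_def Fq_iff)
  hence "\<theta> ^ 1 \<in> Fq"
    using in_Fq_if_rel_norm_rel_trace_in_Fq rel_norm_theta_power[of 1] by simp
  thus False
    using theta_power_in_Fq_iff[of 1] n_ge_4 by simp
qed

text \<open>By \<open>trace_skew\<close>, \<open>trace (\<epsilon> t \<theta>\<^bsup>i q\<^sup>2\<^esup> \<theta>\<^sup>j)\<close> vanishes exactly when the relative trace of
  \<open>\<theta>\<^bsup>i q\<^sup>2\<^esup> \<theta>\<^sup>j\<close> lies in \<open>F\<^sub>q\<close>, i.e. when \<open>j = i\<close>.\<close>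

lemma zero_count_tangent:
  assumes "t \<in> Fq" "t \<noteq> 0" "i < n"
  shows "zero_count (\<epsilon> * t * (\<theta> ^ i) ^ q\<^sup>2) = 1"
proof -
  have "trace (\<epsilon> * t * (\<theta> ^ i) ^ q\<^sup>2 * \<theta> ^ j) = 0 \<longleftrightarrow> j = i" if "j < n" for j
  proof -
    let ?u = "(\<theta> ^ i) ^ q\<^sup>2 * \<theta> ^ j + \<theta> ^ i * (\<theta> ^ j) ^ q\<^sup>2"
    let ?z = "t * ((\<theta> ^ i) ^ q\<^sup>2 * \<theta> ^ j)"
    have "?z ^ q\<^sup>2 = t * (\<theta> ^ i * (\<theta> ^ j) ^ q\<^sup>2)"
      using Fq_power_q_power[OF assms(1), of 2] by (simp only: power_mult_distrib frobenius_compose(5))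
    hence z: "?z + ?z ^ q\<^sup>2 = t * ?u"
      by (simp add: algebra_simps)
    have tu: "(t * ?u) ^ q = t * ?u ^ q"
      using assms(1) by (simp add: power_mult_distrib Fq_iff)
    have "trace (\<epsilon> * t * (\<theta> ^ i) ^ q\<^sup>2 * \<theta> ^ j) = trace (\<epsilon> * ?z)"
      by (simp only: mult.assoc)
    also have "\<dots> = \<epsilon> * ((?z + ?z ^ q\<^sup>2) - (?z + ?z ^ q\<^sup>2) ^ q)"
      by (rule trace_skew[OF epsilon_power_q])
    also have "\<dots> = \<epsilon> * t * (?u - ?u ^ q)"
      by (simp only: z tu) (simp add: algebra_simps)
    finally have "trace (\<epsilon> * t * (\<theta> ^ i) ^ q\<^sup>2 * \<theta> ^ j) = \<epsilon> * t * (?u - ?u ^ q)" .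
    thus ?thesis
      using assms epsilon_nonzero rel_trace_theta_powers_in_Fq_iff[OF assms(3) that]
      by (simp add: Fq_iff eq_commute[of ?u])
  qed
  hence "{j \<in> {..<n}. trace (\<epsilon> * t * (\<theta> ^ i) ^ q\<^sup>2 * \<theta> ^ j) = 0} = {i}"
    using assms(3) by auto
  thus ?thesis
    by (simp add: zero_count_def mult.assoc)
qed

definition tangents :: "'a set" where
  "tangents = (\<lambda>(t, i). \<epsilon> * t * (\<theta> ^ i) ^ q\<^sup>2) ` ((Fq - {0}) \<times> {..<n})"

lemma zero_count_tangents:
  assumes "a \<in> tangents"
  shows "zero_count a = 1"
proof -
  obtain t i where "t \<in> Fq" "t \<noteq> 0" "i < n" "a = \<epsilon> * t * (\<theta> ^ i) ^ q\<^sup>2"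
    using assms by (auto simp: tangents_def)
  thus ?thesis
    by (simp add: zero_count_tangent)
qed

lemma zero_not_in_tangents: "0 \<notin> tangents"
  using epsilon_nonzero theta_nonzero by (auto simp: tangents_def)

lemma tangent_eq_imp_eq:
  assumes t: "t \<in> Fq" "t' \<in> Fq" "t' \<noteq> 0" and i: "i < n" "i' < n"
    and eq: "\<epsilon> * t * (\<theta> ^ i) ^ q\<^sup>2 = \<epsilon> * t' * (\<theta> ^ i') ^ q\<^sup>2"
  shows "t = t' \<and> i = i'"
proof -
  have "(t * \<theta> ^ i) ^ q\<^sup>2 = (t' * \<theta> ^ i') ^ q\<^sup>2"
    using eq epsilon_nonzero Fq_power_q_power[OF t(1), of 2] Fq_power_q_power[OF t(2), of 2]
    by (simp add: power_mult_distrib mult.assoc)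
  hence "((t * \<theta> ^ i) ^ q\<^sup>2) ^ q\<^sup>2 = ((t' * \<theta> ^ i') ^ q\<^sup>2) ^ q\<^sup>2"
    by simp
  hence e: "t * \<theta> ^ i = t' * \<theta> ^ i'"
    by (simp only: frobenius_compose(5))
  hence "\<theta> ^ i' / \<theta> ^ i = t / t'"
    using theta_nonzero t(3) by (simp add: field_simps)
  hence "i = i'"
    using theta_powers_independent[OF i] t by (simp add: Fq_divide)
  thus ?thesis
    using e theta_nonzero by simp
qed

lemma card_tangents: "card tangents = (q - 1) * n"
proof -
  have "inj_on (\<lambda>(t, i). \<epsilon> * t * (\<theta> ^ i) ^ q\<^sup>2) ((Fq - {0}) \<times> {..<n})"
    by (rule inj_onI) (auto dest: tangent_eq_imp_eq)
  thus ?thesis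
    using card_Fq by (simp add: tangents_def card_image card_cartesian_product card_Diff_singleton)
qed

definition secants :: "'a set" where
  "secants = UNIV - insert 0 tangents"

lemma card_secants: "card secants = (q\<^sup>2 - q) * n"
proof -
  have "card (insert 0 tangents) = 1 + (q - 1) * n"
    using zero_not_in_tangents card_tangents by simp
  moreover have "card (insert 0 tangents) \<le> q ^ 4"
    using card_mono[of UNIV "insert 0 tangents"] card_UNIV by simp
  ultimately have "card secants + (1 + (q - 1) * n) = q ^ 4"
    using card_UNIV by (simp add: secants_def card_Diff_subset)
  moreover have "(q\<^sup>2 - q) * n + (1 + (q - 1) * n) = q ^ 4"
    using q_ge_2 by (cases q) (simp_all add: n_def algebra_simps power2_eq_square eval_nat_numeral)
  ultimately show ?thesis
    by simp
qed

lemma sum_split_secants: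
  "(\<Sum>a\<in>UNIV. f a) = f 0 + (\<Sum>a\<in>tangents. f a) + (\<Sum>a\<in>secants. f a)"
proof -
  have "(\<Sum>a\<in>UNIV. f a) = (\<Sum>a\<in>secants. f a) + (\<Sum>a\<in>insert 0 tangents. f a)"
    unfolding secants_def by (rule sum.subset_diff) auto
  thus ?thesis
    using zero_not_in_tangents by (simp add: add_ac)
qed

lemma secant_moment_identities:
  "n * q ^ 3 = n + (q - 1) * n + (q + 1) * ((q\<^sup>2 - q) * n)"
  "n * q ^ 3 + n * (n - 1) * q\<^sup>2 = n\<^sup>2 + (q - 1) * n + (q + 1)\<^sup>2 * ((q\<^sup>2 - q) * n)"
proof -
  define k where "k = q - 1"
  have q: "q = k + 1"
    using q_ge_2 by (simp add: k_def)
  have "q\<^sup>2 - q = k * (k + 1)" "q - 1 = k"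
    unfolding q by (simp_all add: power2_eq_square algebra_simps)
  thus "n * q ^ 3 = n + (q - 1) * n + (q + 1) * ((q\<^sup>2 - q) * n)"
    "n * q ^ 3 + n * (n - 1) * q\<^sup>2 = n\<^sup>2 + (q - 1) * n + (q + 1)\<^sup>2 * ((q\<^sup>2 - q) * n)"
    unfolding n_def q by (simp_all add: power2_eq_square power3_eq_cube algebra_simps)
qed

text \<open>Both moments of \<open>zero_count\<close> over the secant hyperplanes are those of the constant
  \<open>q + 1\<close>, which is therefore its only value there.\<close>

lemma zero_count_secants:
  assumes "a \<in> secants"
  shows "zero_count a = q + 1"
proof (rule eq_const_if_moments[OF finite _ _ assms])
  have S1: "n * q ^ 3 = n + (q - 1) * n + (\<Sum>a\<in>secants. zero_count a)"
    using sum_zero_count sum_split_secants[of zero_count] zero_count_0 card_tangents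
    by (simp add: zero_count_tangents)
  have S2: "n * q ^ 3 + n * (n - 1) * q\<^sup>2 = n ^ 2 + (q - 1) * n + (\<Sum>a\<in>secants. zero_count a ^ 2)"
    using sum_zero_count_squared sum_split_secants[of "\<lambda>a. zero_count a ^ 2"] zero_count_0 card_tangents
    by (simp add: zero_count_tangents)
  have "n * q ^ 3 = n + (q - 1) * n + (q + 1) * card secants"
    "n * q ^ 3 + n * (n - 1) * q\<^sup>2 = n ^ 2 + (q - 1) * n + (q + 1) ^ 2 * card secants"
    unfolding card_secants by (rule secant_moment_identities)+
  with S1 S2 show "(\<Sum>a\<in>secants. zero_count a) = (q + 1) * card secants"
    "(\<Sum>a\<in>secants. zero_count a ^ 2) = (q + 1) ^ 2 * card secants"
    by simp_all
qed

lemma weight_bounds: "0 < q\<^sup>2 - q" "q\<^sup>2 - q < q\<^sup>2"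
  using q_ge_2 by (simp_all add: power2_eq_square)

lemma tangents_nonempty: "tangents \<noteq> {}" and secants_nonempty: "secants \<noteq> {}"
  using card_tangents card_secants q_ge_2 weight_bounds n_ge_4 by fastforce+

lemma hamming_wt_trace_codeword_eq:
  "hamming_wt n (trace_codeword a) = (if a = 0 then 0 else if a \<in> tangents then q\<^sup>2 else q\<^sup>2 - q)"
proof -
  have "n - n = 0" "n - 1 = q\<^sup>2" "n - (q + 1) = q\<^sup>2 - q"
    by (simp_all add: n_def)
  thus ?thesis
    using zero_count_0 zero_count_tangents zero_count_secants[of a]
    by (auto simp: hamming_wt_trace_codeword secants_def)
qed

lemma card_subcode_weight:
  "card {c \<in> subcode. hamming_wt n c = k} =
     (if k = 0 then 1 else if k = q\<^sup>2 then (q - 1) * n else if k = q\<^sup>2 - q then (q\<^sup>2 - q) * n else 0)"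
proof -
  have "{a. hamming_wt n (trace_codeword a) = k} =
     (if k = 0 then {0} else if k = q\<^sup>2 then tangents else if k = q\<^sup>2 - q then secants else {})"
    using zero_not_in_tangents weight_bounds by (auto simp: hamming_wt_trace_codeword_eq secants_def)
  moreover have "{c \<in> subcode. hamming_wt n c = k} = trace_codeword ` {a. hamming_wt n (trace_codeword a) = k}"
    by (auto simp: subcode_eq_range)
  ultimately show ?thesis
    using weight_bounds card_tangents card_secants
    by (simp add: card_image inj_on_subset[OF inj_trace_codeword])
qed

lemma weight_enum_subcode:
  "weight_enum n subcode = 1 + monom ((q\<^sup>2 - q) * (q\<^sup>2 + 1)) (q\<^sup>2 - q) + monom ((q - 1) * (q\<^sup>2 + 1)) (q\<^sup>2)"
proof (rule poly_eqI)
  fix k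
  show "coeff (weight_enum n subcode) k =
     coeff (1 + monom ((q\<^sup>2 - q) * (q\<^sup>2 + 1)) (q\<^sup>2 - q) + monom ((q - 1) * (q\<^sup>2 + 1)) (q\<^sup>2)) k"
    using weight_bounds unfolding n_def[symmetric]
    by (simp add: coeff_weight_enum card_subcode_weight coeff_monom coeff_1)
qed

lemma min_dist_subcode: "min_dist n subcode = q\<^sup>2 - q"
proof -
  have "trace_codeword 0 = (\<lambda>_. 0)"
    by (simp add: trace_codeword_def fun_eq_iff)
  hence "subcode - {\<lambda>_. 0} = trace_codeword ` (UNIV - {0})"
    using image_set_diff[OF inj_trace_codeword, of UNIV "{0}"] by (simp add: subcode_eq_range)
  hence "hamming_wt n ` (subcode - {\<lambda>_. 0}) = (\<lambda>a. hamming_wt n (trace_codeword a)) ` (UNIV - {0})"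
    by (simp add: image_image)
  also have "\<dots> = {q\<^sup>2, q\<^sup>2 - q}"
  proof
    show "(\<lambda>a. hamming_wt n (trace_codeword a)) ` (UNIV - {0}) \<subseteq> {q\<^sup>2, q\<^sup>2 - q}"
      by (auto simp: hamming_wt_trace_codeword_eq)
    obtain a b where ab: "a \<in> tangents" "b \<in> secants"
      using tangents_nonempty secants_nonempty by blast
    hence "hamming_wt n (trace_codeword a) = q\<^sup>2" "hamming_wt n (trace_codeword b) = q\<^sup>2 - q"
      "a \<noteq> 0" "b \<noteq> 0"
      using zero_not_in_tangents by (auto simp: hamming_wt_trace_codeword_eq secants_def)
    thus "{q\<^sup>2, q\<^sup>2 - q} \<subseteq> (\<lambda>a. hamming_wt n (trace_codeword a)) ` (UNIV - {0})"
      by (metis Diff_iff UNIV_I empty_subsetI image_eqI insert_subset singletonD)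
  qed
  finally show ?thesis
    using weight_bounds by (simp add: min_dist_def)
qed

section \<open>The dual code\<close>

definition eval_theta :: "(nat \<Rightarrow> 'a) \<Rightarrow> 'a" where
  "eval_theta y = (\<Sum>i<n. y i * \<theta> ^ i)"

lemma eval_theta_add: "eval_theta (y + y') = eval_theta y + eval_theta y'"
  by (simp add: eval_theta_def sum.distrib algebra_simps)

lemma trace_mult_eval_theta:
  assumes "y \<in> vectors_on Fq {..<n}"
  shows "trace (a * eval_theta y) = (\<Sum>i<n. trace_codeword a i * y i)"
proof -
  have "trace (a * eval_theta y) = (\<Sum>i<n. trace (y i * (a * \<theta> ^ i)))"
    by (simp add: eval_theta_def sum_distrib_left trace_sum algebra_simps)
  also have "\<dots> = (\<Sum>i<n. trace_codeword a i * y i)"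
    using assms by (intro sum.cong refl) (auto simp: vectors_on_def trace_scale trace_codeword_def)
  finally show ?thesis .
qed

lemma dual_subcode_eq: "dual_code Fq n subcode = {y \<in> vectors_on Fq {..<n}. eval_theta y = 0}"
proof -
  have "dual_code Fq n subcode = {y \<in> vectors_on Fq {..<n}. \<forall>a. trace (a * eval_theta y) = 0}"
    by (auto simp: dual_code_def vectors_on_def subcode_eq_range trace_mult_eval_theta)
  also have "\<dots> = {y \<in> vectors_on Fq {..<n}. eval_theta y = 0}"
    using trace_nondegenerate by (auto simp: mult.commute)
  finally show ?thesis .
qed

text \<open>\<open>1, \<theta>, \<theta>\<^sup>2, \<theta>\<^sup>3\<close> is a basis of \<open>F\<^sub>q\<^sub>4\<close> over \<open>F\<^sub>q\<close>: a nonzero relation would be a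
  nonzero polynomial of degree at most \<open>3\<close> over \<open>F\<^sub>q\<close> vanishing at the four conjugates of \<open>\<theta>\<close>.\<close>

lemma inj_on_eval_theta: "inj_on eval_theta (vectors_on Fq {..<4})"
proof (rule inj_onI)
  fix y y' assume y: "y \<in> vectors_on Fq {..<4}" "y' \<in> vectors_on Fq {..<4}" and eq: "eval_theta y = eval_theta y'"
  define d where "d = y - y'"
  have d: "d i \<in> Fq" "i \<ge> 4 \<Longrightarrow> d i = 0" for i
    using y by (cases "i < 4"; auto simp: d_def vectors_on_def Fq_diff)+
  have "eval_theta d = 0"
    using eq eval_theta_add[of d y'] by (simp add: d_def)
  moreover have "eval_theta d = poly (vec_poly 4 d) \<theta>"
    unfolding eval_theta_def poly_vec_poly using d(2) n_ge_4
    by (intro sum.mono_neutral_right) auto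
  ultimately have "poly (vec_poly 4 d) (\<theta> ^ q ^ e) = 0" for e
    using poly_frobenius[where n = 4 and c = d and x = \<theta> and e = e] d(1) q_ge_2 by simp
  hence roots: "poly (vec_poly 4 d) z = 0" if "z \<in> (\<lambda>e. \<theta> ^ q ^ e) ` {..<4}" for z
    using that by blast
  have "d i = 0" for i
  proof (cases "i < 4")
    case True
    show ?thesis
      by (rule vec_poly_eq_0_if_roots[of "(\<lambda>e. \<theta> ^ q ^ e) ` {..<4}" 4])
        (simp_all add: roots True card_image[OF inj_on_conjugates[OF theta_conjugate_ne]])
  qed (simp add: d(2))
  thus "y = y'"
    by (simp add: d_def fun_eq_iff)
qed

lemma eval_theta_image: "eval_theta ` vectors_on Fq {..<n} = UNIV"
proof -
  have "card (eval_theta ` vectors_on Fq {..<4}) = card (UNIV :: 'a set)"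
    using card_image[OF inj_on_eval_theta] card_vectors_on[where K = Fq and I = "{..<4}"] card_Fq card_UNIV
    by simp
  hence "eval_theta ` vectors_on Fq {..<4} = UNIV"
    by (simp add: card_eq_UNIV_imp_eq_UNIV)
  moreover have "vectors_on Fq {..<4} \<subseteq> vectors_on Fq {..<n}"
    using n_ge_4 by (intro vectors_on_mono) auto
  ultimately show ?thesis
    by blast
qed

lemma card_dual_subcode: "card (dual_code Fq n subcode) = q ^ (q\<^sup>2 - 3)"
proof -
  have "card (vectors_on Fq {..<n}) = card (UNIV :: 'a set) * card (dual_code Fq n subcode)"
    unfolding dual_subcode_eq
    by (rule card_eq_card_image_mult_card_kernel[OF _ _ _ eval_theta_image])
       (auto simp: vectors_on_def eval_theta_add Fq_add Fq_minus)
  moreover have "card (vectors_on Fq {..<n}) = q ^ 4 * q ^ (q\<^sup>2 - 3)"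
  proof -
    have "n = 4 + (q\<^sup>2 - 3)"
      using n_ge_4 by (simp add: n_def)
    thus ?thesis
      using card_vectors_on[where K = Fq and I = "{..<n}"] card_Fq by (simp add: power_add)
  qed
  ultimately have "q ^ 4 * q ^ (q\<^sup>2 - 3) = q ^ 4 * card (dual_code Fq n subcode)"
    using card_UNIV by simp
  thus ?thesis
    using q_ge_2 by simp
qed

text \<open>Dividing by \<open>\<theta>\<^sup>i\<close>, a relation makes \<open>\<alpha> + \<beta> w\<close> with \<open>w = \<theta>\<^bsup>j - i\<^esup>\<close> an \<open>F\<^sub>q\<close>-multiple
  of some \<open>\<theta>\<^sup>l\<close>, so its norm to \<open>F\<^sub>q\<^sub>2\<close> lies in \<open>F\<^sub>q\<close>; expanding that norm puts the relative trace
  of \<open>w\<close> in \<open>F\<^sub>q\<close>, hence \<open>w \<in> F\<^sub>q\<close>.\<close>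

lemma no_three_theta_powers_dependent:
  assumes ij: "i < n" "j < n" "i \<noteq> j" and "k < n"
    and \<alpha>\<beta>: "\<alpha> \<in> Fq" "\<beta> \<in> Fq" "\<alpha> \<noteq> 0" "\<beta> \<noteq> 0" and \<gamma>: "\<gamma> \<in> Fq"
  shows "\<alpha> * \<theta> ^ i + \<beta> * \<theta> ^ j + \<gamma> * \<theta> ^ k \<noteq> 0"
proof
  assume eq: "\<alpha> * \<theta> ^ i + \<beta> * \<theta> ^ j + \<gamma> * \<theta> ^ k = 0"
  define w where "w = \<theta> ^ j / \<theta> ^ i"
  have "\<alpha> * \<theta> ^ i + \<beta> * \<theta> ^ j = - (\<gamma> * \<theta> ^ k)"
    using eq by (simp only: eq_neg_iff_add_eq_0)
  hence "(\<alpha> * \<theta> ^ i + \<beta> * \<theta> ^ j) / \<theta> ^ i = (- \<gamma>) * (\<theta> ^ k / \<theta> ^ i)"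
    by simp
  hence "\<alpha> + \<beta> * w = (- \<gamma>) * (\<theta> ^ k / \<theta> ^ i)"
    using theta_nonzero by (simp add: w_def add_divide_distrib)
  hence "rel_norm (\<alpha> + \<beta> * w) = rel_norm (- \<gamma>) * (rel_norm (\<theta> ^ k) / rel_norm (\<theta> ^ i))"
    by (simp only: rel_norm_mult rel_norm_divide)
  hence "rel_norm (\<alpha> + \<beta> * w) \<in> Fq"
    using \<gamma> by (simp add: Fq_mult Fq_divide Fq_minus rel_norm_in_Fq rel_norm_theta_power)
  moreover have w: "rel_norm w \<in> Fq"
    unfolding w_def rel_norm_divide by (intro Fq_divide rel_norm_theta_power)
  ultimately have "\<alpha> * \<beta> * (w + w ^ q\<^sup>2) \<in> Fq"
    using rel_norm_add_scaled[OF \<alpha>\<beta>(1,2), of w] \<alpha>\<beta>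
    by (metis Fq_diff Fq_mult add_diff_cancel_left' add_diff_cancel_right')
  hence "w + w ^ q\<^sup>2 \<in> Fq"
    using Fq_divide[OF _ Fq_mult[OF \<alpha>\<beta>(1,2)]] \<alpha>\<beta>(3,4) by fastforce
  hence "w \<in> Fq"
    using in_Fq_if_rel_norm_rel_trace_in_Fq[OF w] by blast
  thus False
    using theta_powers_independent[OF ij(1,2)] ij(3) by (simp add: w_def)
qed

lemma sum_theta_powers_nonzero:
  assumes "S \<subseteq> {..<n}" "S \<noteq> {}" "card S \<le> 3" "\<And>i. i \<in> S \<Longrightarrow> y i \<in> Fq - {0}"
  shows "(\<Sum>i\<in>S. y i * \<theta> ^ i) \<noteq> 0"
proof -
  have "finite S"
    using assms(1) finite_subset by blast
  hence "card S \<noteq> 0"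
    using assms(2) by simp
  hence "card S = 1 \<or> card S = 2 \<or> card S = 3"
    using assms(3) by linarith
  then consider i where "S = {i}" | i j where "S = {i, j}" "i \<noteq> j"
    | i j k where "S = {i, j, k}" "i \<noteq> j" "j \<noteq> k" "i \<noteq> k"
    by (elim disjE) (auto simp: card_1_singleton_iff card_2_iff card_3_iff)
  thus ?thesis
  proof cases
    case 1
    thus ?thesis
      using assms(4) theta_nonzero by simp
  next
    case (2 i j)
    thus ?thesis
      using assms no_three_theta_powers_dependent[of i j 0 "y i" "y j" 0] n_ge_4 by auto
  next
    case (3 i j k)
    thus ?thesis
      using assms no_three_theta_powers_dependent[of i j k "y i" "y j" "y k"] by (auto simp: add.assoc)
  qed
qed

lemma dual_subcode_weight_ge_4:
  assumes y: "y \<in> dual_code Fq n subcode" "y \<noteq> (\<lambda>_. 0)"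
  shows "4 \<le> hamming_wt n y"
proof (rule ccontr)
  let ?S = "{i \<in> {..<n}. y i \<noteq> 0}"
  assume "\<not> 4 \<le> hamming_wt n y"
  hence "card ?S \<le> 3"
    by (simp add: hamming_wt_def)
  moreover have yV: "y \<in> vectors_on Fq {..<n}" and "eval_theta y = 0"
    using y(1) by (auto simp: dual_subcode_eq)
  hence "(\<Sum>i\<in>?S. y i * \<theta> ^ i) = 0"
    unfolding eval_theta_def by (subst (asm) sum.mono_neutral_left[of "{..<n}" ?S, symmetric]) auto
  moreover have "?S \<noteq> {}"
    using y(2) yV by (auto simp: vectors_on_def fun_eq_iff)
  moreover have "y i \<in> Fq - {0}" if "i \<in> ?S" for i
    using yV that by (auto simp: vectors_on_def)
  ultimately show False
    using sum_theta_powers_nonzero[of ?S y] by blast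
qed

lemma dual_word_of_collision:
  assumes "I \<subseteq> {..<n}" "finite I" "y \<in> vectors_on Fq I" "y' \<in> vectors_on Fq I" "y \<noteq> y'"
    and "eval_theta y = eval_theta y'"
  shows "y - y' \<in> dual_code Fq n subcode" "y - y' \<noteq> (\<lambda>_. 0)" "hamming_wt n (y - y') \<le> card I"
proof -
  have d: "y - y' \<in> vectors_on Fq I"
    using assms(3,4) by (auto simp: vectors_on_def Fq_diff)
  moreover have "vectors_on Fq I \<subseteq> vectors_on Fq {..<n}"
    using assms(1) by (intro vectors_on_mono) auto
  moreover have "eval_theta (y - y') = 0"
    using assms(6) eval_theta_add[of "y - y'" y'] by simp
  ultimately show "y - y' \<in> dual_code Fq n subcode"
    by (auto simp: dual_subcode_eq)
  show "y - y' \<noteq> (\<lambda>_. 0)"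
    using assms(5) by (simp add: fun_eq_iff)
  show "hamming_wt n (y - y') \<le> card I"
    using d assms(2) unfolding hamming_wt_def by (intro card_mono) (auto simp: vectors_on_def)
qed

text \<open>Four of the \<open>q + 1 \<ge> 4\<close> points on a secant hyperplane are dependent: \<open>eval_theta\<close> maps
  the \<open>q\<^sup>4\<close> vectors supported on them into the hyperplane, which has only \<open>q\<^sup>3\<close> elements.\<close>

lemma dual_subcode_weight_4:
  "\<exists>y \<in> dual_code Fq n subcode. y \<noteq> (\<lambda>_. 0) \<and> hamming_wt n y \<le> 4"
proof -
  obtain a where a: "a \<in> secants"
    using secants_nonempty by blast
  let ?I = "{i \<in> {..<n}. trace (a * \<theta> ^ i) = 0}"
  have "card ?I = q + 1"
    using zero_count_secants[OF a] by (simp add: zero_count_def)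
  hence "4 \<le> card ?I"
    using q_gt_2 by simp
  then obtain I where I: "I \<subseteq> ?I" "card I = 4"
    by (meson obtain_subset_with_card_n)
  have I_fin: "finite I" and I_n: "I \<subseteq> {..<n}"
    using I by (auto intro: finite_subset)
  have "eval_theta ` vectors_on Fq I \<subseteq> {x. trace (x * a) = 0}"
  proof clarify
    fix y assume y: "y \<in> vectors_on Fq I"
    hence "y \<in> vectors_on Fq {..<n}"
      using I_n vectors_on_mono[of Fq I "{..<n}"] by auto
    hence "trace (eval_theta y * a) = (\<Sum>i<n. trace_codeword a i * y i)"
      using trace_mult_eval_theta[of y a] by (simp add: mult.commute)
    also have "\<dots> = 0"
      using y I(1) by (intro sum.neutral) (auto simp: vectors_on_def trace_codeword_def)
    finally show "trace (eval_theta y * a) = 0" .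
  qed
  moreover have "a \<noteq> 0"
    using a by (simp add: secants_def)
  ultimately have "card (eval_theta ` vectors_on Fq I) \<le> q ^ 3"
    using card_trace_kernel card_mono[OF finite] by metis
  moreover have "q ^ 3 < q ^ 4"
    using q_ge_2 by simp
  ultimately have "\<not> inj_on eval_theta (vectors_on Fq I)"
    using card_image card_vectors_on[OF I_fin, of Fq] I(2) card_Fq by fastforce
  then obtain y y' where "y \<in> vectors_on Fq I" "y' \<in> vectors_on Fq I" "y \<noteq> y'"
    "eval_theta y = eval_theta y'"
    by (auto simp: inj_on_def)
  thus ?thesis
    using dual_word_of_collision[OF I_n I_fin] I(2) by metis
qed

lemma min_dist_dual_subcode: "min_dist n (dual_code Fq n subcode) = 4"
proof -
  obtain y where y: "y \<in> dual_code Fq n subcode" "y \<noteq> (\<lambda>_. 0)" "hamming_wt n y \<le> 4"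
    using dual_subcode_weight_4 by blast
  have "finite (dual_code Fq n subcode)"
    using card_dual_subcode q_ge_2 card.infinite by fastforce
  thus ?thesis
    unfolding min_dist_def using dual_subcode_weight_ge_4 y
    by (intro Min_eqI) (auto intro!: image_eqI[of _ _ y] simp: le_antisym)
qed

end

theorem theorem4p3:
  fixes p m q n r :: nat and lam \<delta> :: "'a::{field,finite}"
    and g1 g2 :: "'a poly" and C D :: "(nat \<Rightarrow> 'a) set"
  assumes "prime p" and "m > 0" and "q = p ^ m" and "q > 2" and "n = q^2 + 1"
    and "card (UNIV :: 'a set) = q ^ 4"
    and "lam \<noteq> 0" and "lam \<in> Fsub (q^2)" and "mult_ord lam = r"
    and "r dvd (q - 1)" and "multiplicity 2 r = multiplicity 2 (q - 1)"
    and "mult_ord \<delta> = r * n" and "\<delta> ^ n = lam"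
    and "g1 = [:- \<delta>, 1:] * [:- (\<delta> ^ (q^2)), 1:]"
    and "g2 = [:- (\<delta> ^ (q^2 - q + 1)), 1:] * [:- (\<delta> ^ (q^4 - q^3 + q^2)), 1:]"
    and "C = constacyclic_code_chk (Fsub (q^2)) n lam (g1 * g2)"
    and "D = subfield_subcode n C (Fsub q)"
  shows "card D = q ^ 4 \<and> min_dist n D = q^2 - q \<and>
         weight_enum n D = 1 + monom ((q^2 - q) * (q^2 + 1)) (q^2 - q)
                              + monom ((q - 1) * (q^2 + 1)) (q^2) \<and>
         card (dual_code (Fsub q) n D) = q ^ (q^2 - 3) \<and>
         min_dist n (dual_code (Fsub q) n D) = 4"
proof -
  interpret ovoid_code p m q n r lam \<delta>
    using assms by unfold_locales auto
  have "D = subcode"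
    using assms(14-17) by (simp add: subcode_def check_poly_eq)
  thus ?thesis
    using card_subcode min_dist_subcode weight_enum_subcode card_dual_subcode min_dist_dual_subcode
    by simp
qed

end
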